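(* Let $G=C^m_n$ with $2(m+1)\leq n$, and let $\mathcal R=\{G_i:i\in [n]\}$ be a family of graphs. Then $$\gamma_{gr}(G\hookleftarrow \mathcal R)= \max_{I \in \mathcal I_2} \left\{\sum_{i\in I} \gamma_{gr} (G_i)- |I|(m+1)\right\} + n.$$ Moreover, given a Grundy dominating sequence $S_i$ of $G_i$ for all $i\in [n]$, and $I^*\in \mathcal I_2$ such that $$\sum_{i\in I^*} \gamma_{gr} (G_i)- |I^*|(m+1)=\max_{I \in \mathcal I_2} \left\{\sum_{i\in I} \gamma_{gr} (G_i)- |I|(m+1)\right\},$$ the sequence $S$ obtained from $S_C(I^* )$ by replacing each $i\in I^*$ by the sequence $S_i$ is a Grundy dominating sequence of $G\hookleftarrow \mathcal R$.
   Context: $C_n^m$ is the $m$-th power of the cycle $C_n$, with vertex set $[n]=\{1,\dots,n\}$ (addition modulo $n$), where $i,j$ are adjacent iff their distance in $C_n$ is at most $m$. Given a graph $G$ and a family $\mathcal R=\{G_v: v\in V(G)\}$, $G\hookleftarrow \mathcal R$ (the $X$-join product) is the graph obtained by replacing each vertex $v$ of $G$ by $G_v$ (every vertex of $G_v$ is adjacent to every vertex of $G_u$ whenever $uv\in E(G)$). For a sequence $S=(v_1,\dots,v_k)$ of distinct vertices, $PN_S(v_i)=N[v_i]\setminus\bigcup_{j<i}N[v_j]$; $S$ is a legal dominating sequence if its vertex set is dominating and every $PN_S(v_i)\neq\emptyset$. A Grundy dominating sequence is a legal dominating sequence of maximum length, and $\gamma_{gr}(G)$ is that length. $\mathcal I_2$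 denotes the family of independent sets of $C_n^m$ with at least two vertices. For $1\le i\le j\le n$, $S(i,j)=(i,i+1,\dots,j)$ and $S^{-1}$ denotes a sequence reversed; $\oplus$ is concatenation. For $I=\{i^1<i^2<\dots<i^p\}\in\mathcal I_2$, let $S_j=S(i^j,i^{j+1}-(m+1))$ for $j\in[p-1]$, let $S_p$ be the reverse of the sequence $i^p+(m+1),\dots,i^1-1$ (indices mod $n$) if $i^p+(m+1)\neq i^1$ and the empty sequence otherwise, and $S_C(I)=S_1\oplus\cdots\oplus S_{p-1}\oplus S_p\oplus(i^p)$; this is a legal dominating sequence of $C_n^m$ of length $n-|I|m$. *)

theory Defs
  imports Main
begin

record 'a sgraph =
  verts :: "'a set"
  adj   :: "'a \<Rightarrow> 'a \<Rightarrow> bool"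

definition graph :: "'a sgraph \<Rightarrow> bool" where
  "graph G \<longleftrightarrow> finite (verts G) \<and> verts G \<noteq> {}
     \<and> (\<forall>u v. adj G u v \<longrightarrow> u \<in> verts G \<and> v \<in> verts G)
     \<and> (\<forall>u v. adj G u v \<longrightarrow> adj G v u)
     \<and> (\<forall>v. \<not> adj G v v)"

definition cnbhd :: "'a sgraph \<Rightarrow> 'a \<Rightarrow> 'a set" where
  "cnbhd G v = {v} \<union> {u \<in> verts G. adj G v u}"

definition dominating :: "'a sgraph \<Rightarrow> 'a set \<Rightarrow> bool" where
  "dominating G D \<longleftrightarrow> D \<subseteq> verts G \<and> (\<forall>v \<in> verts G. \<exists>u \<in> D. v \<in> cnbhd G u)"

text \<open>Private neighbourhood PN_S(v_i) of the i-th entry (0-based) of a sequence S.\<close>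
definition pn :: "'a sgraph \<Rightarrow> 'a list \<Rightarrow> nat \<Rightarrow> 'a set" where
  "pn G S i = cnbhd G (S ! i) - (\<Union>j<i. cnbhd G (S ! j))"

definition legal_dom_seq :: "'a sgraph \<Rightarrow> 'a list \<Rightarrow> bool" where
  "legal_dom_seq G S \<longleftrightarrow> distinct S \<and> set S \<subseteq> verts G \<and> dominating G (set S)
     \<and> (\<forall>i < length S. pn G S i \<noteq> {})"

definition grundy_dom_seq :: "'a sgraph \<Rightarrow> 'a list \<Rightarrow> bool" where
  "grundy_dom_seq G S \<longleftrightarrow> legal_dom_seq G S
     \<and> (\<forall>T. legal_dom_seq G T \<longrightarrow> length T \<le> length S)"

definition gamma_gr :: "'a sgraph \<Rightarrow> nat" where
  "gamma_gr G = Max {length S | S. legal_dom_seq G S}"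

definition cyc_dist :: "nat \<Rightarrow> nat \<Rightarrow> nat \<Rightarrow> nat" where
  "cyc_dist n i j = (let d = (if i \<le> j then j - i else i - j) in min d (n - d))"

definition cycle_pow :: "nat \<Rightarrow> nat \<Rightarrow> nat sgraph" where
  "cycle_pow n m = \<lparr> verts = {1..n},
     adj = (\<lambda>i j. i \<in> {1..n} \<and> j \<in> {1..n} \<and> i \<noteq> j \<and> cyc_dist n i j \<le> m) \<rparr>"

definition xjoin :: "'v sgraph \<Rightarrow> ('v \<Rightarrow> 'a sgraph) \<Rightarrow> ('v \<times> 'a) sgraph" where
  "xjoin G R = \<lparr> verts = {(v, x). v \<in> verts G \<and> x \<in> verts (R v)},
     adj = (\<lambda>(v, x) (u, y). v \<in> verts G \<and> x \<in> verts (R v) \<and> u \<in> verts G \<and> y \<in> verts (R u)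
              \<and> ((v = u \<and> adj (R v) x y) \<or> (v \<noteq> u \<and> adj G v u))) \<rparr>"

definition indep_set :: "'a sgraph \<Rightarrow> 'a set \<Rightarrow> bool" where
  "indep_set G I \<longleftrightarrow> I \<subseteq> verts G \<and> (\<forall>u \<in> I. \<forall>v \<in> I. \<not> adj G u v)"

definition I2 :: "nat \<Rightarrow> nat \<Rightarrow> nat set set" where
  "I2 n m = {I. indep_set (cycle_pow n m) I \<and> 2 \<le> card I}"

text \<open>With I = {i^1 < ... < i^p} (list is), S_j = S(i^j, i^{j+1}-(m+1)) = [i^j ..< i^{j+1}-m];
  S_p is the reverse of the cyclic run i^p+(m+1), ..., i^1-1 (indices mod n, on {1..n}),
  which has L = n - i^p + i^1 - (m+1) elements (L = 0 exactly when i^p+(m+1) = i^1 mod n);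
  its k-th element (k = 0..L-1) is ((i^p + m + k) mod n) + 1.\<close>
definition S_C :: "nat \<Rightarrow> nat \<Rightarrow> nat set \<Rightarrow> nat list" where
  "S_C n m I = (let is = sorted_list_of_set I; i1 = hd is; ip = last is;
       L = n + i1 - ip - (m + 1) in
     concat (map (\<lambda>(a, b). [a ..< b - m]) (zip is (tl is)))
     @ rev (map (\<lambda>k. (ip + m + k) mod n + 1) [0 ..< L])
     @ [ip])"

definition expand_seq :: "nat set \<Rightarrow> (nat \<Rightarrow> 'a list) \<Rightarrow> (nat \<Rightarrow> 'a) \<Rightarrow> nat list \<Rightarrow> (nat \<times> 'a) list" where
  "expand_seq I seqs c S = concat (map (\<lambda>j. if j \<in> I then map (Pair j) (seqs j) else [(j, c j)]) S)"

end

theory Submission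
  imports Defs
begin

text \<open>Lower bound: S_C(I) is a legal dominating sequence of C_n^m in which every vertex of I is
  its own private neighbour, so replacing each i in I by a Grundy dominating sequence of G_i keeps
  the sequence legal and dominating; its length is n - |I| m - |I| plus the sum of the gamma_gr(G_i).

  Upper bound: in a legal sequence of the X-join call a base vertex fresh if its fibre is entered
  before the vertex is dominated from an adjacent fibre. Fresh vertices are pairwise non-adjacent,
  a fresh fibre holds at most gamma_gr(G_v) entries and any other fibre at most one, and counting
  private neighbours gives |S| + |F| + |D| <= sum over F of gamma_gr(G_v) + n, where D is the set of
  base vertices first dominated by the entries of fresh vertices. In C_n^m the m vertices next to
  the end entered first of every gap between cyclically consecutive fresh vertices lie in D, and
  all 2m neighbours of a single fresh vertex do; so F, or a pair around a single fresh vertex,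
  is a set of I_2 witnessing the bound.\<close>

section \<open>Clockwise distances in powers of cycles\<close>

definition cw_dist :: "nat \<Rightarrow> nat \<Rightarrow> nat \<Rightarrow> nat" where
  "cw_dist n x y = (if x \<le> y then y - x else y + n - x)"

definition cw_shift :: "nat \<Rightarrow> nat \<Rightarrow> nat \<Rightarrow> nat" where
  "cw_shift n e d = (if e + d \<le> n then e + d else e + d - n)"

lemma verts_cycle_pow [simp]: "verts (cycle_pow n m) = {1..n}"
  unfolding cycle_pow_def by simp

lemma adj_cycle_pow_iff:
  "adj (cycle_pow n m) x y \<longleftrightarrow>
     x \<in> {1..n} \<and> y \<in> {1..n} \<and> x \<noteq> y \<and> (cw_dist n x y \<le> m \<or> cw_dist n y x \<le> m)"
  unfolding cycle_pow_def cyc_dist_def cw_dist_def Let_def min_def by (auto split: if_splits)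

lemma adj_cycle_pow_sym: "adj (cycle_pow n m) x y \<longleftrightarrow> adj (cycle_pow n m) y x"
  unfolding adj_cycle_pow_iff by auto

lemma adj_cycle_pow_irrefl [simp]: "\<not> adj (cycle_pow n m) x x"
  unfolding adj_cycle_pow_iff by simp

lemma graph_cycle_pow: "1 \<le> n \<Longrightarrow> graph (cycle_pow n m)"
  unfolding graph_def using adj_cycle_pow_sym by (auto simp: adj_cycle_pow_iff)

lemma cnbhd_cycle_pow: "cnbhd (cycle_pow n m) q = insert q {w. adj (cycle_pow n m) q w}"
  unfolding cnbhd_def adj_cycle_pow_iff by auto

lemma cw_dist_less: "x \<in> {1..n} \<Longrightarrow> y \<in> {1..n} \<Longrightarrow> cw_dist n x y < n"
  unfolding cw_dist_def by auto

lemma cw_dist_eq_0_iff: "x \<in> {1..n} \<Longrightarrow> y \<in> {1..n} \<Longrightarrow> cw_dist n x y = 0 \<longleftrightarrow> x = y"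
  unfolding cw_dist_def by auto

lemma cw_dist_self [simp]: "cw_dist n x x = 0"
  unfolding cw_dist_def by simp

lemma cw_dist_add_cw_dist:
  "x \<in> {1..n} \<Longrightarrow> y \<in> {1..n} \<Longrightarrow> x \<noteq> y \<Longrightarrow> cw_dist n x y + cw_dist n y x = n"
  unfolding cw_dist_def by auto

lemma cw_dist_via:
  "x \<in> {1..n} \<Longrightarrow> y \<in> {1..n} \<Longrightarrow> e \<in> {1..n} \<Longrightarrow> cw_dist n x y =
     (if cw_dist n e x \<le> cw_dist n e y then cw_dist n e y - cw_dist n e x
      else n + cw_dist n e y - cw_dist n e x)"
  unfolding cw_dist_def by auto

lemma cw_dist_inj:
  "x \<in> {1..n} \<Longrightarrow> y \<in> {1..n} \<Longrightarrow> e \<in> {1..n} \<Longrightarrow> cw_dist n e x = cw_dist n e y \<Longrightarrow> x = y"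
  unfolding cw_dist_def by (auto split: if_splits)

lemma cw_shift_mem: "e \<in> {1..n} \<Longrightarrow> d < n \<Longrightarrow> cw_shift n e d \<in> {1..n}"
  unfolding cw_shift_def by auto

lemma cw_dist_cw_shift: "e \<in> {1..n} \<Longrightarrow> d < n \<Longrightarrow> cw_dist n e (cw_shift n e d) = d"
  unfolding cw_shift_def cw_dist_def by auto

lemma adj_cycle_pow_cw_dist_iff:
  assumes "e \<in> {1..n}" "x \<in> {1..n}" "y \<in> {1..n}" "cw_dist n e x < cw_dist n e y"
  shows "adj (cycle_pow n m) x y \<longleftrightarrow>
    cw_dist n e y - cw_dist n e x \<le> m \<or> n - (cw_dist n e y - cw_dist n e x) \<le> m"
proof -
  have "cw_dist n x y = cw_dist n e y - cw_dist n e x" "cw_dist n y x = n + cw_dist n e x - cw_dist n e y"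
    using cw_dist_via[OF assms(2,3,1)] cw_dist_via[OF assms(3,2,1)] assms(4) by auto
  moreover have "cw_dist n e y < n" using cw_dist_less assms by blast
  ultimately show ?thesis using assms unfolding adj_cycle_pow_iff by auto
qed

lemma bij_betw_cw_dist:
  assumes "e \<in> {1..n}"
  shows "bij_betw (cw_dist n e) {1..n} {..<n}"
proof (rule bij_betw_imageI)
  show "inj_on (cw_dist n e) {1..n}" using cw_dist_inj[OF _ _ assms] by (intro inj_onI)
  show "cw_dist n e ` {1..n} = {..<n}"
  proof
    show "{..<n} \<subseteq> cw_dist n e ` {1..n}"
    proof
      fix d assume "d \<in> {..<n}"
      then show "d \<in> cw_dist n e ` {1..n}"
        using cw_dist_cw_shift[OF assms] cw_shift_mem[OF assms] by (intro image_eqI[of _ _ "cw_shift n e d"]) auto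
    qed
  qed (use cw_dist_less[OF assms] in auto)
qed

lemma card_cw_dist_preimage:
  assumes "e \<in> {1..n}" "D \<subseteq> {..<n}"
  shows "card {w \<in> {1..n}. cw_dist n e w \<in> D} = card D"
proof (rule bij_betw_same_card, rule bij_betw_subset[OF bij_betw_cw_dist[OF assms(1)]])
  show "cw_dist n e ` {w \<in> {1..n}. cw_dist n e w \<in> D} = D"
  proof
    show "D \<subseteq> cw_dist n e ` {w \<in> {1..n}. cw_dist n e w \<in> D}"
    proof
      fix d assume d: "d \<in> D"
      then have "d < n" using assms(2) by auto
      then show "d \<in> cw_dist n e ` {w \<in> {1..n}. cw_dist n e w \<in> D}"
        using cw_dist_cw_shift[OF assms(1)] cw_shift_mem[OF assms(1)] d
        by (intro image_eqI[of _ _ "cw_shift n e d"]) auto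
    qed
  qed auto
qed auto

definition cw_nbhd :: "nat \<Rightarrow> nat \<Rightarrow> nat \<Rightarrow> nat set" where
  "cw_nbhd n m e = {w \<in> {1..n}. cw_dist n e w \<in> {1..m}}"

definition ccw_nbhd :: "nat \<Rightarrow> nat \<Rightarrow> nat \<Rightarrow> nat set" where
  "ccw_nbhd n m e = {w \<in> {1..n}. cw_dist n e w \<in> {n - m..<n}}"

lemma card_cw_nbhd: "e \<in> {1..n} \<Longrightarrow> m < n \<Longrightarrow> card (cw_nbhd n m e) = m"
  unfolding cw_nbhd_def by (subst card_cw_dist_preimage) auto

lemma card_ccw_nbhd: "e \<in> {1..n} \<Longrightarrow> m < n \<Longrightarrow> card (ccw_nbhd n m e) = m"
  unfolding ccw_nbhd_def by (subst card_cw_dist_preimage) auto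

lemma cw_nbhd_ccw_nbhd_disjoint: "2 * m < n \<Longrightarrow> cw_nbhd n m e \<inter> ccw_nbhd n m e = {}"
  unfolding cw_nbhd_def ccw_nbhd_def by auto

lemma adj_cycle_pow_eq_cw_ccw_nbhd:
  assumes "e \<in> {1..n}" "m < n"
  shows "{w. adj (cycle_pow n m) e w} = cw_nbhd n m e \<union> ccw_nbhd n m e"
proof -
  have "adj (cycle_pow n m) e w \<longleftrightarrow> cw_dist n e w \<in> {1..m} \<union> {n - m..<n}" if w: "w \<in> {1..n}" for w
  proof (cases "w = e")
    case False
    then have "cw_dist n w e = n - cw_dist n e w" "0 < cw_dist n e w" "cw_dist n e w < n"
      using cw_dist_add_cw_dist[OF assms(1) w] cw_dist_eq_0_iff[OF assms(1) w] cw_dist_less[OF assms(1) w]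
      by auto
    then show ?thesis using False assms w unfolding adj_cycle_pow_iff by auto
  qed (use assms in \<open>simp add: adj_cycle_pow_iff\<close>)
  moreover have "adj (cycle_pow n m) e w \<Longrightarrow> w \<in> {1..n}" for w
    unfolding adj_cycle_pow_iff by simp
  ultimately show ?thesis unfolding cw_nbhd_def ccw_nbhd_def by blast
qed

lemma card_adj_cycle_pow:
  assumes "e \<in> {1..n}" "2 * m < n"
  shows "card {w. adj (cycle_pow n m) e w} = 2 * m"
proof -
  have "card (cw_nbhd n m e \<union> ccw_nbhd n m e) = card (cw_nbhd n m e) + card (ccw_nbhd n m e)"
    using cw_nbhd_ccw_nbhd_disjoint[OF assms(2)] by (intro card_Un_disjoint) (auto simp: cw_nbhd_def ccw_nbhd_def)
  then show ?thesis
    using assms card_cw_nbhd card_ccw_nbhd adj_cycle_pow_eq_cw_ccw_nbhd[OF assms(1)] by simp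
qed

definition cw_arc :: "nat \<Rightarrow> nat \<Rightarrow> nat \<Rightarrow> nat set" where
  "cw_arc n e e' = {w \<in> {1..n}. 0 < cw_dist n e w \<and> cw_dist n e w < cw_dist n e e'}"

lemma adj_across_arc:
  assumes "e \<in> {1..n}" "e' \<in> {1..n}" "v \<in> cw_arc n e e'" "u \<in> {1..n} - cw_arc n e e'"
    "u \<noteq> e" "u \<noteq> e'" "adj (cycle_pow n m) v u"
  shows "adj (cycle_pow n m) e' u \<or> adj (cycle_pow n m) e u"
proof -
  have v: "v \<in> {1..n}" "0 < cw_dist n e v" "cw_dist n e v < cw_dist n e e'"
    using assms(3) unfolding cw_arc_def by auto
  have u: "u \<in> {1..n}" using assms(4) by simp
  have "cw_dist n e u \<noteq> 0" using cw_dist_eq_0_iff[OF assms(1) u] assms(5) by simp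
  moreover have "cw_dist n e u \<noteq> cw_dist n e e'" using cw_dist_inj[OF u assms(2,1)] assms(6) by auto
  ultimately have vu: "cw_dist n e v < cw_dist n e u" and e'u: "cw_dist n e e' < cw_dist n e u"
    using assms(4) v unfolding cw_arc_def by auto
  have eu: "cw_dist n e e < cw_dist n e u" using vu by simp
  have "cw_dist n e u - cw_dist n e v \<le> m \<or> n - (cw_dist n e u - cw_dist n e v) \<le> m"
    using adj_cycle_pow_cw_dist_iff[OF assms(1) v(1) u vu] assms(7) by simp
  then show ?thesis
  proof
    assume "cw_dist n e u - cw_dist n e v \<le> m"
    then have "cw_dist n e u - cw_dist n e e' \<le> m" using v by linarith
    then show ?thesis using adj_cycle_pow_cw_dist_iff[OF assms(1,2) u e'u] by blast
  next
    assume "n - (cw_dist n e u - cw_dist n e v) \<le> m"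
    then have "n - (cw_dist n e u - cw_dist n e e) \<le> m" by simp
    then show ?thesis using adj_cycle_pow_cw_dist_iff[OF assms(1,1) u eu] by blast
  qed
qed

section \<open>Legal sequences and the Grundy domination number\<close>

definition legal_seq :: "'a sgraph \<Rightarrow> 'a list \<Rightarrow> bool" where
  "legal_seq G T \<longleftrightarrow> distinct T \<and> set T \<subseteq> verts G \<and> (\<forall>i < length T. pn G T i \<noteq> {})"

lemma legal_dom_seq_iff: "legal_dom_seq G T \<longleftrightarrow> legal_seq G T \<and> dominating G (set T)"
  unfolding legal_dom_seq_def legal_seq_def by auto

lemma cnbhd_self: "v \<in> cnbhd G v"
  unfolding cnbhd_def by auto

lemma pn_append_left: "i < length T \<Longrightarrow> pn G (T @ U) i = pn G T i"
  unfolding pn_def by (auto simp: nth_append)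

lemma UN_less_length: "(\<Union>j<length T. f (T ! j)) = \<Union>(f ` set T)"
  by (force simp: in_set_conv_nth)

lemma pn_append_right:
  assumes "k < length U"
  shows "pn G (T @ U) (length T + k) = pn G U k - \<Union>(cnbhd G ` set T)"
proof -
  have "{..<length T + k} = {..<length T} \<union> (\<lambda>j. length T + j) ` {..<k}"
    by (simp add: lessThan_atLeast0 image_add_atLeastLessThan add.commute ivl_disj_un_two(3))
  then have "(\<Union>j<length T + k. cnbhd G ((T @ U) ! j))
      = (\<Union>j<length T. cnbhd G (T ! j)) \<union> (\<Union>j<k. cnbhd G (U ! j))"
    by (simp add: nth_append)
  then show ?thesis
    unfolding pn_def UN_less_length using assms by (simp add: nth_append) blast
qed

lemma all_less_add_iff: "(\<forall>i < a + b. P i) \<longleftrightarrow> (\<forall>i < a. P i) \<and> (\<forall>k < b. P (a + k))"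
  for a b :: nat
proof -
  have "P i" if "\<forall>i < a. P i" "\<forall>k < b. P (a + k)" "i < a + b" for i
  proof (cases "i < a")
    case False
    then have "i = a + (i - a)" "i - a < b" using that(3) by auto
    then show ?thesis using that(2) by metis
  qed (use that in auto)
  moreover have "(\<forall>i < a + b. P i) \<Longrightarrow> (\<forall>i < a. P i) \<and> (\<forall>k < b. P (a + k))"
    by simp
  ultimately show ?thesis by blast
qed

lemma legal_seq_append_iff:
  "legal_seq G (T @ U) \<longleftrightarrow> legal_seq G T \<and> distinct U \<and> set U \<subseteq> verts G \<and> set T \<inter> set U = {}
     \<and> (\<forall>k < length U. pn G U k - \<Union>(cnbhd G ` set T) \<noteq> {})"
  unfolding legal_seq_def length_append all_less_add_iff
  using pn_append_left[of _ T G U] pn_append_right[of _ U G T] by auto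


lemma legal_seq_extends_to_legal_dom_seq:
  assumes "finite (verts G)" "legal_seq G T"
  shows "\<exists>T'. legal_dom_seq G T' \<and> length T \<le> length T'"
  using assms(2)
proof (induction "card (verts G - \<Union>(cnbhd G ` set T))" arbitrary: T rule: less_induct)
  case less
  show ?case
  proof (cases "verts G \<subseteq> \<Union>(cnbhd G ` set T)")
    case True
    then show ?thesis
      using less.prems by (intro exI[of _ T]) (auto simp: legal_dom_seq_iff dominating_def legal_seq_def)
  next
    case False
    then obtain v where v: "v \<in> verts G" "v \<notin> \<Union>(cnbhd G ` set T)" by auto
    then have "legal_seq G (T @ [v])"
      using less.prems cnbhd_self[of v G] by (auto simp: legal_seq_append_iff pn_def)
    moreover have "card (verts G - \<Union>(cnbhd G ` set (T @ [v]))) < card (verts G - \<Union>(cnbhd G ` set T))"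
      using assms(1) v cnbhd_self[of v G] by (intro psubset_card_mono) auto
    ultimately show ?thesis using less.hyps by fastforce
  qed
qed

lemma finite_legal_dom_seq_lengths:
  assumes "finite (verts G)"
  shows "finite {length S | S. legal_dom_seq G S}"
proof (rule finite_subset)
  show "{length S | S. legal_dom_seq G S} \<subseteq> {..card (verts G)}"
    using assms by (auto simp: legal_dom_seq_def distinct_card[symmetric] intro: card_mono)
qed simp

lemma legal_seq_length_le_gamma_gr:
  assumes "finite (verts G)" "legal_seq G T"
  shows "length T \<le> gamma_gr G"
proof -
  obtain T' where "legal_dom_seq G T'" "length T \<le> length T'"
    using legal_seq_extends_to_legal_dom_seq[OF assms] by blast
  moreover have "length T' \<le> gamma_gr G"
    unfolding gamma_gr_def using finite_legal_dom_seq_lengths[OF assms(1)] calculation(1)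
    by (intro Max_ge) auto
  ultimately show ?thesis by simp
qed

lemma ex_legal_dom_seq_length_gamma_gr:
  assumes "finite (verts G)"
  shows "\<exists>S. legal_dom_seq G S \<and> length S = gamma_gr G"
proof -
  have "legal_seq G []" by (simp add: legal_seq_def)
  then have "{length S | S. legal_dom_seq G S} \<noteq> {}"
    using legal_seq_extends_to_legal_dom_seq[OF assms] by blast
  then have "gamma_gr G \<in> {length S | S. legal_dom_seq G S}"
    unfolding gamma_gr_def using Max_in finite_legal_dom_seq_lengths[OF assms] by blast
  then show ?thesis by auto
qed

lemma grundy_dom_seq_iff:
  assumes "finite (verts G)"
  shows "grundy_dom_seq G S \<longleftrightarrow> legal_dom_seq G S \<and> length S = gamma_gr G"
  using ex_legal_dom_seq_length_gamma_gr[OF assms] legal_seq_length_le_gamma_gr[OF assms]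
  unfolding grundy_dom_seq_def legal_dom_seq_iff by (metis le_antisym)

lemma gamma_gr_pos:
  assumes "graph G"
  shows "0 < gamma_gr G"
proof -
  have "finite (verts G)" "verts G \<noteq> {}" using assms unfolding graph_def by auto
  then obtain S where "legal_dom_seq G S" "length S = gamma_gr G"
    using ex_legal_dom_seq_length_gamma_gr by blast
  with \<open>verts G \<noteq> {}\<close> show ?thesis unfolding legal_dom_seq_def dominating_def by auto
qed

text \<open>Listing the indices in increasing order turns private neighbours into a legal sequence.\<close>

lemma card_le_gamma_gr_if_private_neighbours:
  fixes P :: "nat set" and f :: "nat \<Rightarrow> 'a"
  assumes "finite (verts G)" "finite P" "f ` P \<subseteq> verts G" "inj_on f P"
    and neighbours: "\<forall>t\<in>P. \<exists>y \<in> cnbhd G (f t). \<forall>t'\<in>P. t' < t \<longrightarrow> y \<notin> cnbhd G (f t')"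
  shows "card P \<le> gamma_gr G"
proof -
  define l where "l = sorted_list_of_set P"
  have l: "sorted_wrt (<) l" "set l = P" "distinct l" "length l = card P"
    unfolding l_def using assms(2) by auto
  have "pn G (map f l) i \<noteq> {}" if i: "i < length l" for i
  proof -
    obtain y where y: "y \<in> cnbhd G (f (l ! i))" "\<forall>t'\<in>P. t' < l ! i \<longrightarrow> y \<notin> cnbhd G (f t')"
      using neighbours i l(2) nth_mem by blast
    have "l ! j < l ! i" "l ! j \<in> P" if "j < i" for j
      using sorted_wrt_nth_less[OF l(1) that i] that i l(2) by auto
    with y i have "y \<in> pn G (map f l) i" unfolding pn_def by auto
    then show ?thesis by auto
  qed
  then have "legal_seq G (map f l)"
    unfolding legal_seq_def using l assms(3,4) by (auto simp: distinct_map)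
  from legal_seq_length_le_gamma_gr[OF assms(1) this] show ?thesis using l by simp
qed

section \<open>The X-join product\<close>

lemma mem_verts_xjoin [simp]: "(v, x) \<in> verts (xjoin G R) \<longleftrightarrow> v \<in> verts G \<and> x \<in> verts (R v)"
  unfolding xjoin_def by auto

lemma finite_verts_xjoin:
  "finite (verts G) \<Longrightarrow> (\<And>v. v \<in> verts G \<Longrightarrow> finite (verts (R v))) \<Longrightarrow> finite (verts (xjoin G R))"
  unfolding xjoin_def by (auto intro: finite_subset[of _ "Sigma (verts G) (\<lambda>v. verts (R v))"])

lemma cnbhd_xjoin:
  assumes "(v, x) \<in> verts (xjoin G R)"
  shows "(u, y) \<in> cnbhd (xjoin G R) (v, x) \<longleftrightarrow>
     (u = v \<and> y \<in> cnbhd (R v) x) \<or> (u \<noteq> v \<and> adj G v u \<and> u \<in> verts G \<and> y \<in> verts (R u))"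
  using assms unfolding cnbhd_def xjoin_def by auto

lemma fst_mem_cnbhd_xjoin:
  "(v, x) \<in> verts (xjoin G R) \<Longrightarrow> z \<in> cnbhd (xjoin G R) (v, x) \<Longrightarrow> fst z \<in> cnbhd G v"
  using cnbhd_xjoin[of v x G R "fst z" "snd z"] by (auto simp: cnbhd_def)

lemma pn_xjoin_map_Pair:
  assumes "q \<in> verts G" "set T \<subseteq> verts (R q)" "k < length T"
  shows "Pair q ` pn (R q) T k \<subseteq> pn (xjoin G R) (map (Pair q) T) k"
proof
  fix z assume "z \<in> Pair q ` pn (R q) T k"
  then obtain y where y: "z = (q, y)" "y \<in> pn (R q) T k" by auto
  have "(q, T ! j) \<in> verts (xjoin G R)" if "j < length T" for j
    using assms that nth_mem by auto
  with y assms(3) show "z \<in> pn (xjoin G R) (map (Pair q) T) k"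
    unfolding pn_def by (auto simp: cnbhd_xjoin)
qed

definition expand_block :: "'v set \<Rightarrow> ('v \<Rightarrow> 'a list) \<Rightarrow> ('v \<Rightarrow> 'a) \<Rightarrow> 'v \<Rightarrow> ('v \<times> 'a) list" where
  "expand_block I seqs c j = (if j \<in> I then map (Pair j) (seqs j) else [(j, c j)])"

lemma expand_seq_eq: "expand_seq I seqs c Q = concat (map (expand_block I seqs c) Q)"
  unfolding expand_seq_def expand_block_def by simp

lemma expand_seq_snoc:
  "expand_seq I seqs c (Q @ [q]) = expand_seq I seqs c Q @ expand_block I seqs c q"
  unfolding expand_seq_eq by simp

lemma set_expand_seq: "set (expand_seq I seqs c Q) = (\<Union>j\<in>set Q. set (expand_block I seqs c j))"
  unfolding expand_seq_eq by simp

lemma fst_set_expand_seq: "fst ` set (expand_seq I seqs c Q) \<subseteq> set Q"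
  unfolding set_expand_seq expand_block_def by (auto split: if_splits)

lemma length_expand_seq:
  assumes "distinct Q" "I \<subseteq> set Q"
  shows "length (expand_seq I seqs c Q) = (\<Sum>j\<in>I. length (seqs j)) + card (set Q - I)"
proof -
  have "length (expand_seq I seqs c Q) = (\<Sum>j\<in>set Q. length (expand_block I seqs c j))"
    unfolding expand_seq_eq using assms(1)
    by (simp add: length_concat comp_def sum_list_distinct_conv_sum_set)
  also have "\<dots> = (\<Sum>j\<in>I. length (expand_block I seqs c j)) + (\<Sum>j\<in>set Q - I. length (expand_block I seqs c j))"
    using assms(2) by (metis List.finite_set sum.subset_diff add.commute)
  also have "\<dots> = (\<Sum>j\<in>I. length (seqs j)) + card (set Q - I)"
    unfolding expand_block_def by simp
  finally show ?thesis .
qed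

text \<open>A vertex of I that is its own private neighbour can be replaced by a whole legal sequence
  of its fibre; S_C(I) is such a sequence.\<close>

definition legal_self_private :: "'v sgraph \<Rightarrow> 'v set \<Rightarrow> 'v list \<Rightarrow> bool" where
  "legal_self_private G I Q \<longleftrightarrow> legal_seq G Q \<and> (\<forall>k < length Q. Q ! k \<in> I \<longrightarrow> Q ! k \<in> pn G Q k)"

lemma legal_self_private_append_iff:
  "legal_self_private G I (T @ U) \<longleftrightarrow> legal_self_private G I T \<and> legal_seq G (T @ U)
     \<and> (\<forall>k < length U. U ! k \<in> I \<longrightarrow> U ! k \<in> pn G U k - \<Union>(cnbhd G ` set T))"
proof -
  have "(\<forall>k < length (T @ U). (T @ U) ! k \<in> I \<longrightarrow> (T @ U) ! k \<in> pn G (T @ U) k) \<longleftrightarrow>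
      (\<forall>k < length T. T ! k \<in> I \<longrightarrow> T ! k \<in> pn G T k)
      \<and> (\<forall>k < length U. U ! k \<in> I \<longrightarrow> U ! k \<in> pn G U k - \<Union>(cnbhd G ` set T))"
    unfolding length_append all_less_add_iff by (simp add: nth_append pn_append_left pn_append_right)
  moreover have "legal_seq G (T @ U) \<longrightarrow> legal_seq G T" by (simp add: legal_seq_append_iff)
  ultimately show ?thesis unfolding legal_self_private_def by argo
qed

lemma legal_self_private_appendI:
  assumes "legal_self_private G I X" "distinct Y" "set Y \<subseteq> verts G" "set X \<inter> set Y = {}"
    and "\<And>k. k < length Y \<Longrightarrow> \<exists>w \<in> cnbhd G (Y ! k). (Y ! k \<in> I \<longrightarrow> w = Y ! k)
           \<and> (\<forall>q\<in>set X. w \<notin> cnbhd G q) \<and> (\<forall>j<k. w \<notin> cnbhd G (Y ! j))"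
  shows "legal_self_private G I (X @ Y)"
proof -
  have w: "\<exists>w \<in> pn G Y k - \<Union>(cnbhd G ` set X). Y ! k \<in> I \<longrightarrow> w = Y ! k" if k: "k < length Y" for k
  proof -
    obtain w where "w \<in> cnbhd G (Y ! k)" "Y ! k \<in> I \<longrightarrow> w = Y ! k"
      "\<forall>q\<in>set X. w \<notin> cnbhd G q" "\<forall>j<k. w \<notin> cnbhd G (Y ! j)"
      using assms(5)[OF k] by blast
    then show ?thesis by (intro bexI[of _ w]) (auto simp: pn_def)
  qed
  then have "legal_seq G (X @ Y)"
    using assms(1-4) unfolding legal_seq_append_iff legal_self_private_def by blast
  moreover have "Y ! k \<in> pn G Y k - \<Union>(cnbhd G ` set X)" if "k < length Y" "Y ! k \<in> I" for k
    using w[OF that(1)] that(2) by blast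
  ultimately show ?thesis using assms(1) unfolding legal_self_private_append_iff by blast
qed

lemma legal_self_private_snocD:
  assumes "legal_self_private G I (Q @ [q])"
  shows "legal_self_private G I Q" "q \<in> verts G" "q \<notin> set Q"
    and "\<exists>w \<in> cnbhd G q - \<Union>(cnbhd G ` set Q). q \<in> I \<longrightarrow> w = q"
proof -
  have *: "legal_self_private G I Q" "legal_seq G (Q @ [q])"
    "q \<in> I \<Longrightarrow> q \<in> cnbhd G q - \<Union>(cnbhd G ` set Q)"
    using assms unfolding legal_self_private_append_iff by (auto simp: pn_def)
  then show "legal_self_private G I Q" "q \<in> verts G" "q \<notin> set Q"
    unfolding legal_seq_append_iff by auto
  have "cnbhd G q - \<Union>(cnbhd G ` set Q) \<noteq> {}"
    using *(2) unfolding legal_seq_append_iff by (simp add: pn_def)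
  then show "\<exists>w \<in> cnbhd G q - \<Union>(cnbhd G ` set Q). q \<in> I \<longrightarrow> w = q"
    using *(3) by (cases "q \<in> I") blast+
qed

lemma expand_block_private:
  assumes "q \<in> verts G" "w \<in> cnbhd G q" "q \<in> I \<longrightarrow> w = q"
    and "q \<in> I \<Longrightarrow> legal_seq (R q) (seqs q)" "c q \<in> verts (R q)" "verts (R w) \<noteq> {}"
    and "k < length (expand_block I seqs c q)"
  shows "\<exists>y. (w, y) \<in> pn (xjoin G R) (expand_block I seqs c q) k"
proof (cases "q \<in> I")
  case True
  then have "k < length (seqs q)" "set (seqs q) \<subseteq> verts (R q)" "pn (R q) (seqs q) k \<noteq> {}"
    using assms(4,7) unfolding expand_block_def legal_seq_def by auto
  then show ?thesis
    using pn_xjoin_map_Pair[OF assms(1), where T = "seqs q" and k = k and R = R] assms(3) True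
    unfolding expand_block_def by auto
next
  case False
  then have "k = 0" using assms(7) unfolding expand_block_def by simp
  have "(q, c q) \<in> verts (xjoin G R)" using assms(1,5) by simp
  then have "\<exists>y. (w, y) \<in> cnbhd (xjoin G R) (q, c q)"
  proof (cases "w = q")
    case False
    then have "adj G q w" "w \<in> verts G" using assms(2) unfolding cnbhd_def by auto
    then show ?thesis using False assms(6) \<open>(q, c q) \<in> verts (xjoin G R)\<close> by (auto simp: cnbhd_xjoin)
  qed (intro exI[of _ "c q"], simp add: cnbhd_self)
  then show ?thesis using False \<open>k = 0\<close> unfolding expand_block_def pn_def by simp
qed

lemma legal_seq_expand_seq:
  fixes G :: "nat sgraph" and R :: "nat \<Rightarrow> 'a sgraph"
  assumes seqs: "\<forall>j\<in>I. legal_seq (R j) (seqs j)"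
    and c: "\<forall>j\<in>verts G. c j \<in> verts (R j)" and nonempty: "\<forall>j\<in>verts G. verts (R j) \<noteq> {}"
  shows "legal_self_private G I Q \<Longrightarrow> legal_seq (xjoin G R) (expand_seq I seqs c Q)"
proof (induction Q rule: rev_induct)
  case Nil
  show ?case by (simp add: expand_seq_def legal_seq_def)
next
  case (snoc q Q)
  let ?H = "xjoin G R" and ?T = "expand_seq I seqs c Q" and ?U = "expand_block I seqs c q"
  obtain w where Q: "legal_self_private G I Q" "q \<notin> set Q" "q \<in> verts G"
    and w: "w \<in> cnbhd G q" "w \<notin> \<Union>(cnbhd G ` set Q)" "q \<in> I \<longrightarrow> w = q"
    using legal_self_private_snocD[OF snoc.prems] by blast
  have T: "legal_seq ?H ?T" using snoc.IH Q(1) .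
  have "w \<in> verts G" using w(1) Q(3) unfolding cnbhd_def by auto
  have undominated: "(w, y) \<notin> cnbhd ?H s" if "s \<in> set ?T" for y s
  proof
    assume "(w, y) \<in> cnbhd ?H s"
    moreover have "fst s \<in> set Q" using that fst_set_expand_seq[of I seqs c Q] by blast
    moreover have "s \<in> verts ?H" using that T unfolding legal_seq_def by blast
    ultimately have "w \<in> cnbhd G (fst s)"
      using fst_mem_cnbhd_xjoin[of "fst s" "snd s"] by fastforce
    with w(2) \<open>fst s \<in> set Q\<close> show False by blast
  qed
  have "pn ?H ?U k - \<Union>(cnbhd ?H ` set ?T) \<noteq> {}" if k: "k < length ?U" for k
  proof -
    obtain y where "(w, y) \<in> pn ?H ?U k"
      using expand_block_private[OF Q(3) w(1,3) _ _ _ k] seqs c nonempty Q(3) \<open>w \<in> verts G\<close>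
      by blast
    with undominated show ?thesis by blast
  qed
  moreover have "distinct ?U" "set ?U \<subseteq> verts ?H"
    using seqs[rule_format, of q] c Q(3) unfolding expand_block_def legal_seq_def
    by (auto simp: distinct_map inj_on_def)
  moreover have "set ?T \<inter> set ?U = {}"
    using fst_set_expand_seq[of I seqs c Q] Q(2) unfolding expand_block_def by force
  ultimately show ?case using T unfolding expand_seq_snoc legal_seq_append_iff by blast
qed

lemma ex_mem_expand_block:
  assumes "verts (R q) \<noteq> {}" "q \<in> I \<Longrightarrow> dominating (R q) (set (seqs q))"
  shows "\<exists>x. (q, x) \<in> set (expand_block I seqs c q)"
proof (cases "q \<in> I")
  case True
  then have "seqs q \<noteq> []" using assms unfolding dominating_def by auto
  then show ?thesis using True unfolding expand_block_def by (auto simp: neq_Nil_conv)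
qed (simp add: expand_block_def)

lemma dominating_expand_seq:
  fixes G :: "nat sgraph" and R :: "nat \<Rightarrow> 'a sgraph"
  assumes "graph G" and graphs: "\<forall>v\<in>verts G. graph (R v)"
    and seqs: "\<forall>j\<in>I. legal_dom_seq (R j) (seqs j)" and c: "\<forall>j\<in>verts G. c j \<in> verts (R j)"
    and Q: "set Q \<subseteq> verts G" "I \<subseteq> set Q" and cover: "\<forall>w\<in>verts G - I. \<exists>q\<in>set Q. adj G q w"
  shows "dominating (xjoin G R) (set (expand_seq I seqs c Q))"
proof -
  let ?H = "xjoin G R" and ?S = "expand_seq I seqs c Q"
  have S: "set ?S \<subseteq> verts ?H"
  proof
    fix s assume "s \<in> set ?S"
    then obtain j where "j \<in> set Q" "s \<in> set (expand_block I seqs c j)" unfolding set_expand_seq by blast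
    moreover have "set (seqs j) \<subseteq> verts (R j)" if "j \<in> I"
      using seqs that unfolding legal_dom_seq_def by blast
    ultimately show "s \<in> verts ?H"
      using Q(1) c unfolding expand_block_def by (auto split: if_splits)
  qed
  have "\<exists>s\<in>set ?S. (w, y) \<in> cnbhd ?H s" if w: "w \<in> verts G" "y \<in> verts (R w)" for w y
  proof (cases "w \<in> I")
    case True
    then obtain x where "x \<in> set (seqs w)" "y \<in> cnbhd (R w) x"
      using seqs w unfolding legal_dom_seq_def dominating_def by blast
    moreover from this(1) have "(w, x) \<in> set ?S"
      using True Q(2) unfolding set_expand_seq expand_block_def by auto
    moreover from this have "(w, x) \<in> verts ?H" using S by blast
    ultimately show ?thesis by (intro bexI[of _ "(w, x)"]) (auto simp: cnbhd_xjoin)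
  next
    case False
    then obtain q where q: "q \<in> set Q" "adj G q w" using cover w by auto
    then have "q \<noteq> w" "q \<in> verts G" using \<open>graph G\<close> Q(1) unfolding graph_def by auto
    have "verts (R q) \<noteq> {}" using graphs \<open>q \<in> verts G\<close> unfolding graph_def by blast
    moreover have "q \<in> I \<Longrightarrow> dominating (R q) (set (seqs q))"
      using seqs unfolding legal_dom_seq_def by blast
    ultimately obtain x where "(q, x) \<in> set (expand_block I seqs c q)"
      using ex_mem_expand_block by metis
    then have "(q, x) \<in> set ?S" using q(1) unfolding set_expand_seq by blast
    moreover from this have "(q, x) \<in> verts ?H" using S by blast
    ultimately show ?thesis
      using q(2) \<open>q \<noteq> w\<close> w by (intro bexI[of _ "(q, x)"]) (auto simp: cnbhd_xjoin)
  qed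
  with S show ?thesis unfolding dominating_def by auto
qed

lemma legal_dom_seq_expand_seq:
  fixes G :: "nat sgraph" and R :: "nat \<Rightarrow> 'a sgraph"
  assumes "graph G" and graphs: "\<forall>v\<in>verts G. graph (R v)"
    and seqs: "\<forall>j\<in>I. legal_dom_seq (R j) (seqs j)" and c: "\<forall>j\<in>verts G. c j \<in> verts (R j)"
    and Q: "legal_self_private G I Q" "I \<subseteq> set Q" and cover: "\<forall>w\<in>verts G - I. \<exists>q\<in>set Q. adj G q w"
  shows "legal_dom_seq (xjoin G R) (expand_seq I seqs c Q)"
proof -
  have "\<forall>j\<in>verts G. verts (R j) \<noteq> {}" using graphs unfolding graph_def by auto
  then have "legal_seq (xjoin G R) (expand_seq I seqs c Q)"
    using legal_seq_expand_seq[OF _ c _ Q(1)] seqs by (simp add: legal_dom_seq_iff)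
  moreover have "set Q \<subseteq> verts G" using Q(1) unfolding legal_self_private_def legal_seq_def by simp
  ultimately show ?thesis
    using dominating_expand_seq[OF assms(1-4) _ Q(2) cover] by (simp add: legal_dom_seq_iff)
qed

section \<open>Counting the entries of a legal sequence of an X-join\<close>

text \<open>The entries in any fibre form a legal sequence of
  that fibre, and a late fibre is entered only once. The private neighbour of the entry of a late
  vertex v lies in an adjacent fibre (target v) not dominated before; distinct late vertices have
  distinct targets, and a target is neither gained by a fresh vertex nor a fresh vertex whose
  fibre is already dominated by its own entries.\<close>

locale xjoin_legal_seq =
  fixes G :: "'v sgraph" and R :: "'v \<Rightarrow> 'a sgraph" and S :: "('v \<times> 'a) list"
  assumes graph: "graph G"
    and finite_fibres: "\<And>v. v \<in> verts G \<Longrightarrow> finite (verts (R v))"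
    and legal: "legal_seq (xjoin G R) S"
begin

abbreviation "H \<equiv> xjoin G R"

lemma adj_sym: "adj G u v \<Longrightarrow> adj G v u"
  using graph unfolding graph_def by blast

lemma adj_irrefl: "\<not> adj G v v"
  using graph unfolding graph_def by blast

lemma adj_verts: "adj G u v \<Longrightarrow> u \<in> verts G \<and> v \<in> verts G"
  using graph unfolding graph_def by blast

lemma finite_verts: "finite (verts G)"
  using graph unfolding graph_def by blast

definition vtx :: "nat \<Rightarrow> 'v" where "vtx t = fst (S ! t)"
definition elt :: "nat \<Rightarrow> 'a" where "elt t = snd (S ! t)"

definition dom_before :: "nat \<Rightarrow> 'v \<Rightarrow> bool" where
  "dom_before t w \<longleftrightarrow> (\<exists>t'<t. adj G (vtx t') w)"

definition occ :: "'v \<Rightarrow> nat set" where "occ v = {t. t < length S \<and> vtx t = v}"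
definition first_occ :: "'v \<Rightarrow> nat" where "first_occ v = (LEAST t. t < length S \<and> vtx t = v)"

definition fresh :: "'v set" where "fresh = {v. occ v \<noteq> {} \<and> \<not> dom_before (first_occ v) v}"
definition late :: "'v set" where "late = {v. occ v \<noteq> {} \<and> dom_before (first_occ v) v}"
definition gained :: "'v \<Rightarrow> 'v set" where "gained e = {w. adj G e w \<and> \<not> dom_before (first_occ e) w}"
definition unsaturated :: "'v set" where
  "unsaturated = {e \<in> fresh. \<exists>y\<in>verts (R e). \<forall>t\<in>occ e. y \<notin> cnbhd (R e) (elt t)}"

lemma S_nth: "S ! t = (vtx t, elt t)"
  unfolding vtx_def elt_def by simp

lemma entry_verts: "t < length S \<Longrightarrow> vtx t \<in> verts G \<and> elt t \<in> verts (R (vtx t))"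
  using legal nth_mem[of t S] S_nth[of t] unfolding legal_seq_def by auto

lemma dom_before_mono: "dom_before t w \<Longrightarrow> t \<le> t' \<Longrightarrow> dom_before t' w"
  unfolding dom_before_def using less_le_trans by blast

lemma first_occ:
  assumes "occ v \<noteq> {}"
  shows "first_occ v \<in> occ v" "vtx (first_occ v) = v" "\<And>t. t \<in> occ v \<Longrightarrow> first_occ v \<le> t"
proof -
  obtain t where "t < length S \<and> vtx t = v" using assms unfolding occ_def by auto
  then show "first_occ v \<in> occ v" "vtx (first_occ v) = v"
    using LeastI[of "\<lambda>t. t < length S \<and> vtx t = v"] unfolding first_occ_def occ_def by auto
  show "first_occ v \<le> t" if "t \<in> occ v" for t
    using that unfolding first_occ_def occ_def by (auto intro: Least_le)
qed

lemma dom_before_after_first_occ: "occ v \<noteq> {} \<Longrightarrow> adj G v w \<Longrightarrow> first_occ v < t \<Longrightarrow> dom_before t w"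
  unfolding dom_before_def using first_occ(2) by metis

lemma first_occ_inj: "occ v \<noteq> {} \<Longrightarrow> occ v' \<noteq> {} \<Longrightarrow> first_occ v = first_occ v' \<Longrightarrow> v = v'"
  using first_occ(2) by metis

lemma finite_occ: "finite (occ v)"
  unfolding occ_def by auto

lemma occ_verts: "t \<in> occ v \<Longrightarrow> v \<in> verts G \<and> elt t \<in> verts (R v)"
  using entry_verts unfolding occ_def by auto

lemma inj_on_elt_occ: "inj_on elt (occ v)"
proof
  fix t t' assume tt: "t \<in> occ v" "t' \<in> occ v" "elt t = elt t'"
  then have "S ! t = S ! t'" using S_nth[of t] S_nth[of t'] unfolding occ_def by auto
  moreover have "distinct S" using legal unfolding legal_seq_def by auto
  ultimately show "t = t'" using tt nth_eq_iff_index_eq unfolding occ_def by auto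
qed

lemma mem_cnbhd_entry_iff:
  assumes "t < length S"
  shows "(w, y) \<in> cnbhd H (S ! t) \<longleftrightarrow>
    (vtx t = w \<and> y \<in> cnbhd (R w) (elt t)) \<or> (vtx t \<noteq> w \<and> adj G (vtx t) w \<and> y \<in> verts (R w))"
  using cnbhd_xjoin[of "vtx t" "elt t" G R w y] entry_verts[OF assms] adj_verts S_nth[of t]
  by (auto simp: eq_commute)

lemma private_entry:
  assumes t: "t < length S"
  obtains w y where
    "(w = vtx t \<and> y \<in> cnbhd (R w) (elt t)) \<or> (w \<noteq> vtx t \<and> adj G (vtx t) w \<and> y \<in> verts (R w))"
    "\<And>j. j < t \<Longrightarrow> vtx j = w \<Longrightarrow> y \<notin> cnbhd (R w) (elt j)"
    "\<not> dom_before t w"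
proof -
  have "pn H S t \<noteq> {}" using legal t unfolding legal_seq_def by auto
  then obtain w y where wy: "(w, y) \<in> cnbhd H (S ! t)" "\<And>j. j < t \<Longrightarrow> (w, y) \<notin> cnbhd H (S ! j)"
    unfolding pn_def by auto
  have own: "(w = vtx t \<and> y \<in> cnbhd (R w) (elt t)) \<or> (w \<noteq> vtx t \<and> adj G (vtx t) w \<and> y \<in> verts (R w))"
    using wy(1) mem_cnbhd_entry_iff[OF t] by auto
  then have "y \<in> verts (R w)"
    using entry_verts[OF t] unfolding cnbhd_def by auto
  then have "\<not> adj G (vtx j) w" if "j < t" for j
    using wy(2)[OF that] mem_cnbhd_entry_iff[of j w y] that t adj_irrefl by fastforce
  then have "\<not> dom_before t w" unfolding dom_before_def by blast
  moreover have "y \<notin> cnbhd (R w) (elt j)" if "j < t" "vtx j = w" for j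
    using wy(2)[OF that(1)] mem_cnbhd_entry_iff[of j w y] that t by auto
  ultimately show ?thesis using that own by blast
qed

text \<open>When a fibre is entered again, every vertex outside it adjacent to it is already
  dominated, so the private neighbour lies in the fibre itself.\<close>

lemma private_repeated_entry:
  assumes t: "t < length S" and j: "j < t" "vtx j = vtx t"
  shows "\<exists>y \<in> cnbhd (R (vtx t)) (elt t). \<forall>j<t. vtx j = vtx t \<longrightarrow> y \<notin> cnbhd (R (vtx t)) (elt j)"
    and "\<not> dom_before t (vtx t)"
proof -
  obtain w y where wy: "(w = vtx t \<and> y \<in> cnbhd (R w) (elt t)) \<or> (w \<noteq> vtx t \<and> adj G (vtx t) w \<and> y \<in> verts (R w))"
    "\<And>j. j < t \<Longrightarrow> vtx j = w \<Longrightarrow> y \<notin> cnbhd (R w) (elt j)" "\<not> dom_before t w"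
    using private_entry[OF t] by blast
  have "w = vtx t"
  proof (rule ccontr)
    assume "w \<noteq> vtx t"
    then have "adj G (vtx j) w" using wy(1) j by auto
    then show False using wy(3) j unfolding dom_before_def by auto
  qed
  then show "\<exists>y \<in> cnbhd (R (vtx t)) (elt t). \<forall>j<t. vtx j = vtx t \<longrightarrow> y \<notin> cnbhd (R (vtx t)) (elt j)"
    and "\<not> dom_before t (vtx t)" using wy by auto
qed

lemma occ_private:
  assumes "t \<in> occ v"
  shows "\<exists>y\<in>cnbhd (R v) (elt t). \<forall>t'\<in>occ v. t' < t \<longrightarrow> y \<notin> cnbhd (R v) (elt t')"
proof (cases "t = first_occ v")
  case True
  then show ?thesis using first_occ(3)[of v] assms cnbhd_self[of "elt t" "R v"] by force
next
  case False
  then have "first_occ v < t" using first_occ(3)[of v t] assms by fastforce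
  then show ?thesis
    using private_repeated_entry(1)[of t "first_occ v"] first_occ(1,2)[of v] assms
    unfolding occ_def by auto
qed

lemma not_dom_before_fresh:
  assumes "v \<in> fresh" "t \<in> occ v"
  shows "\<not> dom_before t v"
proof (cases "t = first_occ v")
  case True
  then show ?thesis using assms unfolding fresh_def by auto
next
  case False
  then have "first_occ v < t" using first_occ(3)[of v t] assms(2) by fastforce
  then show ?thesis
    using private_repeated_entry(2)[of t "first_occ v"] first_occ(1,2)[of v] assms(2)
    unfolding occ_def by auto
qed

lemma card_occ_late:
  assumes "v \<in> late"
  shows "card (occ v) \<le> 1"
proof -
  have ne: "occ v \<noteq> {}" and dom: "dom_before (first_occ v) v" using assms unfolding late_def by auto
  have "t = first_occ v" if t: "t \<in> occ v" for t
  proof (rule ccontr)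
    assume "t \<noteq> first_occ v"
    then have "first_occ v < t" using first_occ(3)[OF ne t] by auto
    then have "\<not> dom_before t v" "dom_before t v"
      using private_repeated_entry(2)[of t "first_occ v"] first_occ(1,2)[OF ne] t
        dom_before_mono[OF dom] unfolding occ_def by auto
    then show False by blast
  qed
  then have "occ v \<subseteq> {first_occ v}" by blast
  then show ?thesis using card_mono[of "{first_occ v}" "occ v"] by simp
qed

lemma card_occ_le_gamma_gr:
  assumes "occ v \<noteq> {}"
  shows "card (occ v) \<le> gamma_gr (R v)"
proof -
  have "v \<in> verts G" using occ_verts assms by auto
  then show ?thesis
    using card_le_gamma_gr_if_private_neighbours[OF finite_fibres finite_occ, of v elt]
      occ_verts inj_on_elt_occ occ_private by blast
qed

text \<open>A further vertex of the fibre can be appended after the entries of S in it.\<close>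

lemma Suc_card_occ_le_gamma_gr:
  assumes "occ v \<noteq> {}" "y \<in> verts (R v)" "\<forall>t\<in>occ v. y \<notin> cnbhd (R v) (elt t)"
  shows "card (occ v) + 1 \<le> gamma_gr (R v)"
proof -
  have v: "v \<in> verts G" using occ_verts assms(1) by auto
  have new: "length S \<notin> occ v" unfolding occ_def by auto
  let ?P = "insert (length S) (occ v)" and ?f = "elt(length S := y)"
  have f: "?f t = elt t" if "t \<in> occ v" for t using that new by auto
  have "card ?P \<le> gamma_gr (R v)"
  proof (rule card_le_gamma_gr_if_private_neighbours[OF finite_fibres[OF v]])
    show "finite ?P" using finite_occ by simp
    show "?f ` ?P \<subseteq> verts (R v)" using occ_verts assms(2) f by auto
    have "y \<noteq> elt t" if "t \<in> occ v" for t using assms(3) that cnbhd_self by metis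
    then show "inj_on ?f ?P" using inj_on_elt_occ f new by (auto simp: inj_on_def)
    show "\<forall>t\<in>?P. \<exists>z\<in>cnbhd (R v) (?f t). \<forall>t'\<in>?P. t' < t \<longrightarrow> z \<notin> cnbhd (R v) (?f t')"
    proof
      fix t assume t: "t \<in> ?P"
      show "\<exists>z\<in>cnbhd (R v) (?f t). \<forall>t'\<in>?P. t' < t \<longrightarrow> z \<notin> cnbhd (R v) (?f t')"
      proof (cases "t = length S")
        case True
        then show ?thesis using assms(3) f cnbhd_self[of y "R v"] by (intro bexI[of _ y]) auto
      next
        case False
        then have "t \<in> occ v" "t < length S" using t unfolding occ_def by auto
        then show ?thesis using occ_private[of t v] f by auto
      qed
    qed
  qed
  then show ?thesis using new finite_occ by simp
qed

lemma fresh_late_disjoint: "fresh \<inter> late = {}"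
  unfolding fresh_def late_def by auto

lemma fresh_subset: "fresh \<subseteq> verts G"
  using occ_verts unfolding fresh_def by blast

lemma late_subset: "late \<subseteq> verts G"
  using occ_verts unfolding late_def by blast

lemma gained_subset: "gained e \<subseteq> verts G"
  using adj_verts unfolding gained_def by auto

lemma dom_before_first_occ_cases:
  assumes "occ u \<noteq> {}" "occ v \<noteq> {}" "u \<noteq> v" "adj G u w" "adj G v w'"
  shows "dom_before (first_occ v) w \<or> dom_before (first_occ u) w'"
proof -
  have "first_occ u \<noteq> first_occ v" using first_occ_inj assms(1-3) by auto
  then consider "first_occ u < first_occ v" | "first_occ v < first_occ u" by linarith
  then show ?thesis
    using dom_before_after_first_occ[OF assms(1,4)] dom_before_after_first_occ[OF assms(2,5)]
    by cases auto
qed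

lemma fresh_nonadj:
  assumes "e \<in> fresh" "f \<in> fresh"
  shows "\<not> adj G e f"
proof
  assume "adj G e f"
  then have "e \<noteq> f" using adj_irrefl by auto
  with \<open>adj G e f\<close> show False
    using dom_before_first_occ_cases[of e f f e] adj_sym assms unfolding fresh_def by auto
qed

lemma gained_disjoint:
  assumes "e \<in> fresh" "f \<in> fresh" "e \<noteq> f"
  shows "gained e \<inter> gained f = {}"
proof -
  have "w \<notin> gained f" if "w \<in> gained e" for w
    using that dom_before_first_occ_cases[of e f w w] assms unfolding fresh_def gained_def by auto
  then show ?thesis by blast
qed

lemma gained_fresh_disjoint: "e \<in> fresh \<Longrightarrow> gained e \<inter> fresh = {}"
  using fresh_nonadj unfolding gained_def by auto

definition target :: "'v \<Rightarrow> 'v" where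
  "target v = (SOME w. \<exists>y. adj G v w \<and> \<not> dom_before (first_occ v) w \<and> y \<in> verts (R w)
     \<and> (\<forall>j<first_occ v. vtx j = w \<longrightarrow> y \<notin> cnbhd (R w) (elt j)))"

lemma target:
  assumes "v \<in> late"
  shows "\<exists>y. adj G v (target v) \<and> \<not> dom_before (first_occ v) (target v) \<and> y \<in> verts (R (target v))
     \<and> (\<forall>j<first_occ v. vtx j = target v \<longrightarrow> y \<notin> cnbhd (R (target v)) (elt j))"
proof -
  have ne: "occ v \<noteq> {}" and dom: "dom_before (first_occ v) v" using assms unfolding late_def by auto
  have t: "first_occ v < length S" "vtx (first_occ v) = v" using first_occ(1,2)[OF ne] unfolding occ_def by auto
  obtain w y where wy:
    "(w = v \<and> y \<in> cnbhd (R w) (elt (first_occ v))) \<or> (w \<noteq> v \<and> adj G v w \<and> y \<in> verts (R w))"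
    "\<And>j. j < first_occ v \<Longrightarrow> vtx j = w \<Longrightarrow> y \<notin> cnbhd (R w) (elt j)" "\<not> dom_before (first_occ v) w"
    using private_entry[OF t(1), unfolded t(2)] by blast
  then have "w \<noteq> v" using dom by auto
  with wy(1) have "adj G v w" "y \<in> verts (R w)" by auto
  with wy(2,3) have "\<exists>w y. adj G v w \<and> \<not> dom_before (first_occ v) w \<and> y \<in> verts (R w)
     \<and> (\<forall>j<first_occ v. vtx j = w \<longrightarrow> y \<notin> cnbhd (R w) (elt j))" by blast
  then show ?thesis unfolding target_def by (rule someI_ex)
qed

lemma inj_on_target: "inj_on target late"
proof
  fix v v' assume vv: "v \<in> late" "v' \<in> late" "target v = target v'"
  show "v = v'"
  proof (rule ccontr)
    assume "v \<noteq> v'"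
    then show False
      using dom_before_first_occ_cases[of v v' "target v" "target v"] target[OF vv(1)] target[OF vv(2)]
        vv unfolding late_def by auto
  qed
qed

lemma target_not_gained:
  assumes "v \<in> late" "e \<in> fresh"
  shows "target v \<notin> gained e"
proof
  assume "target v \<in> gained e"
  moreover have "v \<noteq> e" using assms fresh_late_disjoint by auto
  ultimately show False
    using dom_before_first_occ_cases[of v e "target v" "target v"] target[OF assms(1)] assms
    unfolding late_def fresh_def gained_def by auto
qed

lemma target_fresh_unsaturated:
  assumes "v \<in> late" "target v \<in> fresh"
  shows "target v \<in> unsaturated"
proof -
  let ?e = "target v"
  obtain y where y: "adj G v ?e" "y \<in> verts (R ?e)" "\<forall>j<first_occ v. vtx j = ?e \<longrightarrow> y \<notin> cnbhd (R ?e) (elt j)"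
    using target[OF assms(1)] by auto
  have ne: "occ v \<noteq> {}" using assms unfolding late_def by auto
  have "y \<notin> cnbhd (R ?e) (elt t)" if t: "t \<in> occ ?e" for t
  proof -
    have "\<not> first_occ v < t"
      using not_dom_before_fresh[OF assms(2) t] dom_before_after_first_occ[OF ne y(1)] by auto
    moreover have "t \<noteq> first_occ v"
      using t first_occ(2)[OF ne] assms fresh_late_disjoint unfolding occ_def by auto
    ultimately show ?thesis using y(3) t unfolding occ_def by auto
  qed
  then show ?thesis unfolding unsaturated_def using assms(2) y(2) by auto
qed

lemma length_eq_sum_card_occ: "length S = (\<Sum>v\<in>fresh. card (occ v)) + (\<Sum>v\<in>late. card (occ v))"
proof -
  have fin: "finite (fresh \<union> late)" using fresh_subset late_subset finite_verts finite_subset by auto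
  have "{..<length S} = (\<Union>v\<in>fresh \<union> late. occ v)"
    using first_occ(1) unfolding occ_def fresh_def late_def by auto
  then have "length S = card (\<Union>v\<in>fresh \<union> late. occ v)" by (metis card_lessThan)
  also have "\<dots> = (\<Sum>v\<in>fresh \<union> late. card (occ v))"
    using fin finite_occ by (intro card_UN_disjoint) (auto simp: occ_def)
  also have "\<dots> = (\<Sum>v\<in>fresh. card (occ v)) + (\<Sum>v\<in>late. card (occ v))"
    using fin fresh_late_disjoint by (simp add: sum.union_disjoint)
  finally show ?thesis .
qed

lemma sum_card_occ_fresh_le:
  "(\<Sum>v\<in>fresh. card (occ v)) + card unsaturated \<le> (\<Sum>v\<in>fresh. gamma_gr (R v))"
proof -
  have "finite fresh" using fresh_subset finite_verts finite_subset by auto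
  have "card unsaturated = (\<Sum>v\<in>fresh. if v \<in> unsaturated then 1 else 0)"
    using \<open>finite fresh\<close> by (simp add: sum.If_cases unsaturated_def Int_def)
  then have "(\<Sum>v\<in>fresh. card (occ v)) + card unsaturated
      = (\<Sum>v\<in>fresh. card (occ v) + (if v \<in> unsaturated then 1 else 0))"
    by (simp add: sum.distrib)
  also have "\<dots> \<le> (\<Sum>v\<in>fresh. gamma_gr (R v))"
  proof (rule sum_mono)
    fix v assume "v \<in> fresh"
    then have "occ v \<noteq> {}" unfolding fresh_def by auto
    then show "card (occ v) + (if v \<in> unsaturated then 1 else 0) \<le> gamma_gr (R v)"
      using card_occ_le_gamma_gr Suc_card_occ_le_gamma_gr unfolding unsaturated_def by auto
  qed
  finally show ?thesis .
qed

lemma card_late_le: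
  "card late + card fresh + card (\<Union>e\<in>fresh. gained e) \<le> card unsaturated + card (verts G)"
proof -
  let ?D = "\<Union>e\<in>fresh. gained e"
  have sub: "fresh \<union> ?D \<subseteq> verts G" using fresh_subset gained_subset by blast
  then have fin: "finite fresh" "finite ?D" using finite_verts finite_subset by blast+
  have "finite unsaturated" using fin(1) unfolding unsaturated_def by simp
  have card_fD: "card (fresh \<union> ?D) = card fresh + card ?D"
    using fin gained_fresh_disjoint by (subst card_Un_disjoint) auto
  have "card late = card (target ` late)" using card_image[OF inj_on_target] by simp
  also have "\<dots> \<le> card (target ` late \<inter> fresh) + card (target ` late - fresh)"
    by (metis card_Un_le Int_Diff_Un)
  also have "card (target ` late \<inter> fresh) \<le> card unsaturated"
    using target_fresh_unsaturated \<open>finite unsaturated\<close> by (intro card_mono) auto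
  also have "card (target ` late - fresh) \<le> card (verts G - (fresh \<union> ?D))"
  proof (intro card_mono)
    show "target ` late - fresh \<subseteq> verts G - (fresh \<union> ?D)"
      using target adj_verts target_not_gained by blast
  qed (use finite_verts in simp)
  also have "card (verts G - (fresh \<union> ?D)) = card (verts G) - (card fresh + card ?D)"
    using card_Diff_subset[OF finite_subset[OF sub finite_verts] sub] card_fD by simp
  finally show ?thesis using card_mono[OF finite_verts sub] card_fD by linarith
qed

theorem length_add_card_fresh_le:
  "length S + card fresh + card (\<Union>e\<in>fresh. gained e) \<le> (\<Sum>e\<in>fresh. gamma_gr (R e)) + card (verts G)"
proof -
  have "(\<Sum>v\<in>late. card (occ v)) \<le> card late"
    using sum_mono[of late "\<lambda>v. card (occ v)" "\<lambda>v. 1"] card_occ_late by auto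
  then show ?thesis
    using length_eq_sum_card_occ sum_card_occ_fresh_le card_late_le by linarith
qed

end

locale cycle_pow_legal_seq = xjoin_legal_seq "cycle_pow n m" R S
  for n m :: nat and R :: "nat \<Rightarrow> 'a sgraph" and S +
  assumes m_pos: "1 \<le> m" and n_ge: "2 * (m + 1) \<le> n"
begin

abbreviation "C \<equiv> cycle_pow n m"

lemma fresh_first_occ:
  assumes "e \<in> fresh"
  shows "e \<in> {1..n}" "\<not> dom_before (first_occ e) e" "t < first_occ e \<Longrightarrow> vtx t \<noteq> e"
proof -
  have "occ e \<noteq> {}" using assms unfolding fresh_def by auto
  then have "first_occ e < length S" "\<And>t. t \<in> occ e \<Longrightarrow> first_occ e \<le> t"
    using first_occ(1,3) unfolding occ_def by auto
  then show "vtx t \<noteq> e" if "t < first_occ e"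
    using that unfolding occ_def by (metis (mono_tags, lifting) mem_Collect_eq not_le order.strict_trans)
  show "e \<in> {1..n}" "\<not> dom_before (first_occ e) e" using assms fresh_subset unfolding fresh_def by auto
qed

lemma dom_before_entry_not_fresh:
  assumes "t < length S" "vtx t \<notin> fresh"
  shows "dom_before t (vtx t)"
proof -
  have t: "t \<in> occ (vtx t)" using assms unfolding occ_def by auto
  then have "dom_before (first_occ (vtx t)) (vtx t)" using assms unfolding fresh_def by auto
  then show ?thesis using dom_before_mono first_occ(3)[OF _ t] t by blast
qed

lemma first_entry_fresh:
  assumes "0 < length S"
  shows "vtx 0 \<in> fresh" "gained (vtx 0) = {w. adj C (vtx 0) w}"
proof -
  have "0 \<in> occ (vtx 0)" using assms unfolding occ_def by auto
  then have "first_occ (vtx 0) = 0" using first_occ(3)[of "vtx 0" 0] by auto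
  then show "vtx 0 \<in> fresh" "gained (vtx 0) = {w. adj C (vtx 0) w}"
    using \<open>0 \<in> occ (vtx 0)\<close> unfolding fresh_def gained_def dom_before_def by auto
qed

lemma fresh_far:
  assumes "e \<in> fresh" "f \<in> fresh" "e \<noteq> f"
  shows "m < cw_dist n e f"
  using fresh_nonadj[OF assms(1,2)] fresh_first_occ(1)[OF assms(1)] fresh_first_occ(1)[OF assms(2)] assms(3)
  unfolding adj_cycle_pow_iff by auto

definition cw_succ :: "nat \<Rightarrow> nat" where
  "cw_succ e = (SOME e'. e' \<in> fresh \<and> e' \<noteq> e \<and> (\<forall>f\<in>fresh. f \<noteq> e \<longrightarrow> cw_dist n e e' \<le> cw_dist n e f))"

lemma cw_succ:
  assumes "e \<in> fresh" "2 \<le> card fresh"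
  shows "cw_succ e \<in> fresh" "cw_succ e \<noteq> e" "f \<in> fresh \<Longrightarrow> f \<noteq> e \<Longrightarrow> cw_dist n e (cw_succ e) \<le> cw_dist n e f"
proof -
  have "\<not> fresh \<subseteq> {e}" using assms(2) card_mono[of "{e}" fresh] by auto
  then obtain k where "k \<in> fresh \<and> k \<noteq> e" by auto
  then obtain e' where "e' \<in> fresh \<and> e' \<noteq> e" "\<forall>f. f \<in> fresh \<and> f \<noteq> e \<longrightarrow> cw_dist n e e' \<le> cw_dist n e f"
    using ex_has_least_nat[of "\<lambda>f. f \<in> fresh \<and> f \<noteq> e" k "cw_dist n e"] by blast
  then have "\<exists>e'. e' \<in> fresh \<and> e' \<noteq> e \<and> (\<forall>f\<in>fresh. f \<noteq> e \<longrightarrow> cw_dist n e e' \<le> cw_dist n e f)"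
    by blast
  from someI_ex[OF this] show "cw_succ e \<in> fresh" "cw_succ e \<noteq> e"
    "f \<in> fresh \<Longrightarrow> f \<noteq> e \<Longrightarrow> cw_dist n e (cw_succ e) \<le> cw_dist n e f"
    unfolding cw_succ_def by auto
qed

lemma fresh_not_in_gap:
  assumes "e \<in> fresh" "2 \<le> card fresh" "f \<in> fresh"
  shows "f \<notin> cw_arc n e (cw_succ e)"
proof
  assume "f \<in> cw_arc n e (cw_succ e)"
  then have "0 < cw_dist n e f" "cw_dist n e f < cw_dist n e (cw_succ e)" unfolding cw_arc_def by auto
  moreover from this(1) have "f \<noteq> e" by auto
  ultimately show False using cw_succ(3)[OF assms] by simp
qed

text \<open>An entry outside the arc adjacent to a vertex inside it would be adjacent to one of the
  ends of the arc, dominating that fresh vertex before its first occurrence.\<close>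

lemma early_entry_not_adj_arc:
  assumes "e \<in> fresh" "e' \<in> fresh" "t < first_occ e" "t < first_occ e'"
    and "vtx t \<notin> cw_arc n e e'" "w \<in> cw_arc n e e'" "adj C (vtx t) w"
  shows False
proof -
  have ne: "vtx t \<noteq> e" "vtx t \<noteq> e'"
    using fresh_first_occ(3)[OF assms(1,3)] fresh_first_occ(3)[OF assms(2,4)] by auto
  have "vtx t \<in> {1..n}" using adj_verts[OF assms(7)] by simp
  then have "adj C e' (vtx t) \<or> adj C e (vtx t)"
    using adj_across_arc[OF fresh_first_occ(1)[OF assms(1)] fresh_first_occ(1)[OF assms(2)] assms(6) _ ne]
      assms(5,7) adj_sym by blast
  then have "dom_before (first_occ e') e' \<or> dom_before (first_occ e) e"
    using assms(3,4) adj_sym unfolding dom_before_def by blast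
  then show False using fresh_first_occ(2) assms(1,2) by blast
qed

lemma early_entry_outside_gap:
  assumes e: "e \<in> fresh" and two: "2 \<le> card fresh"
  shows "t < first_occ e \<Longrightarrow> t < first_occ (cw_succ e) \<Longrightarrow> vtx t \<notin> cw_arc n e (cw_succ e)"
proof (induction t rule: less_induct)
  case (less t)
  have e': "cw_succ e \<in> fresh" using cw_succ[OF e two] by auto
  show ?case
  proof
    assume gap: "vtx t \<in> cw_arc n e (cw_succ e)"
    have "t < length S" using less.prems first_occ(1)[of e] e unfolding fresh_def occ_def by auto
    moreover have "vtx t \<notin> fresh" using fresh_not_in_gap[OF e two] gap by blast
    ultimately obtain t' where "t' < t" "adj C (vtx t') (vtx t)"
      using dom_before_entry_not_fresh unfolding dom_before_def by blast
    then show False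
      using early_entry_not_adj_arc[OF e e', of t' "vtx t"] less gap by auto
  qed
qed

lemma gap_not_dom_before:
  assumes e: "e \<in> fresh" and two: "2 \<le> card fresh" and w: "w \<in> cw_arc n e (cw_succ e)"
    and t: "t \<le> first_occ e" "t \<le> first_occ (cw_succ e)"
  shows "\<not> dom_before t w"
  using early_entry_not_adj_arc[OF e cw_succ(1)[OF e two] _ _ early_entry_outside_gap[OF e two] w] t
  unfolding dom_before_def by fastforce

lemma cw_nbhd_gained:
  assumes e: "e \<in> fresh" and two: "2 \<le> card fresh" and first: "first_occ e < first_occ (cw_succ e)"
  shows "cw_nbhd n m e \<subseteq> gained e"
proof
  fix w assume w: "w \<in> cw_nbhd n m e"
  have "m < cw_dist n e (cw_succ e)" using fresh_far[OF e] cw_succ[OF e two] by auto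
  then have "w \<in> cw_arc n e (cw_succ e)" using w unfolding cw_nbhd_def cw_arc_def by auto
  then have "\<not> dom_before (first_occ e) w" using gap_not_dom_before[OF e two] first by auto
  moreover have "adj C e w"
    using w fresh_first_occ(1)[OF e] adj_cycle_pow_eq_cw_ccw_nbhd[of e n m] n_ge by auto
  ultimately show "w \<in> gained e" unfolding gained_def by auto
qed

lemma ccw_nbhd_gained:
  assumes e: "e \<in> fresh" and two: "2 \<le> card fresh" and first: "first_occ (cw_succ e) < first_occ e"
  shows "ccw_nbhd n m (cw_succ e) \<subseteq> gained (cw_succ e)"
proof
  let ?e' = "cw_succ e"
  fix w assume w: "w \<in> ccw_nbhd n m ?e'"
  have e': "?e' \<in> fresh" "?e' \<noteq> e" using cw_succ[OF e two] by auto
  have ein: "e \<in> {1..n}" "?e' \<in> {1..n}" using fresh_first_occ(1) e e'(1) by auto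
  have w': "w \<in> {1..n}" "n - m \<le> cw_dist n ?e' w" "cw_dist n ?e' w < n"
    using w unfolding ccw_nbhd_def by auto
  have "m < cw_dist n e ?e'" using fresh_far e'(1) e e'(2) by auto
  moreover have "cw_dist n e ?e' + cw_dist n ?e' e = n" using cw_dist_add_cw_dist[OF ein] e'(2) by auto
  moreover have "cw_dist n e w = (if cw_dist n ?e' e \<le> cw_dist n ?e' w then cw_dist n ?e' w - cw_dist n ?e' e
      else n + cw_dist n ?e' w - cw_dist n ?e' e)"
    using cw_dist_via[OF ein(1) w'(1) ein(2)] .
  ultimately have "w \<in> cw_arc n e ?e'" using w' unfolding cw_arc_def by auto
  then have "\<not> dom_before (first_occ ?e') w" using gap_not_dom_before[OF e two] first by auto
  moreover have "adj C ?e' w"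
    using w ein(2) adj_cycle_pow_eq_cw_ccw_nbhd[of ?e' n m] n_ge by auto
  ultimately show "w \<in> gained ?e'" unfolding gained_def by auto
qed

lemma inj_on_cw_succ:
  assumes two: "2 \<le> card fresh"
  shows "inj_on cw_succ fresh"
proof
  fix e f assume ef: "e \<in> fresh" "f \<in> fresh" "cw_succ e = cw_succ f"
  show "e = f"
  proof (rule ccontr)
    assume "e \<noteq> f"
    let ?g = "cw_succ e"
    have g: "?g \<in> fresh" "?g \<noteq> e" "?g \<noteq> f" using cw_succ[OF ef(1) two] cw_succ[OF ef(2) two] ef(3) by auto
    have ein: "e \<in> {1..n}" "f \<in> {1..n}" "?g \<in> {1..n}" using fresh_subset ef g by auto
    have "cw_dist n e ?g \<le> cw_dist n e f" "cw_dist n f ?g \<le> cw_dist n f e"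
      using cw_succ(3)[OF ef(1) two ef(2)] cw_succ(3)[OF ef(2) two ef(1)] \<open>e \<noteq> f\<close> ef(3) by auto
    moreover have "cw_dist n e f + cw_dist n f e = n" using cw_dist_add_cw_dist[OF ein(1,2) \<open>e \<noteq> f\<close>] .
    moreover have "cw_dist n e ?g \<noteq> 0" "cw_dist n e ?g \<noteq> cw_dist n e f"
      using cw_dist_eq_0_iff[OF ein(1,3)] cw_dist_inj[OF ein(3,2,1)] g by auto
    ultimately show False using cw_dist_via[OF ein(2,3,1)] by (auto split: if_splits)
  qed
qed

definition cw_full :: "nat set" where "cw_full = {e \<in> fresh. cw_nbhd n m e \<subseteq> gained e}"
definition ccw_full :: "nat set" where "ccw_full = {e \<in> fresh. ccw_nbhd n m e \<subseteq> gained e}"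

text \<open>In each gap between consecutive fresh vertices, the end that is entered first gains the m
  vertices of the gap next to it.\<close>

lemma card_fresh_le_card_full:
  assumes two: "2 \<le> card fresh"
  shows "card fresh \<le> card cw_full + card ccw_full"
proof -
  have fin: "finite fresh" using fresh_subset finite_verts finite_subset by auto
  have "cw_succ ` (fresh - cw_full) \<subseteq> ccw_full"
  proof
    fix f assume "f \<in> cw_succ ` (fresh - cw_full)"
    then obtain e where e: "e \<in> fresh" "e \<notin> cw_full" "f = cw_succ e" by auto
    have f: "f \<in> fresh" "f \<noteq> e" using cw_succ[OF e(1) two] e(3) by auto
    then have "first_occ e \<noteq> first_occ f"
      using first_occ_inj[of e f] e(1) unfolding fresh_def by auto
    moreover have "\<not> first_occ e < first_occ f"
      using cw_nbhd_gained[OF e(1) two] e unfolding cw_full_def by auto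
    ultimately have "ccw_nbhd n m f \<subseteq> gained f"
      using ccw_nbhd_gained[OF e(1) two] e(3) by auto
    then show "f \<in> ccw_full" using f unfolding ccw_full_def by auto
  qed
  then have "card (fresh - cw_full) \<le> card ccw_full"
    using inj_on_subset[OF inj_on_cw_succ[OF two]] fin unfolding ccw_full_def
    by (intro card_inj_on_le) auto
  moreover have "cw_full \<subseteq> fresh" unfolding cw_full_def by auto
  then have "card fresh = card cw_full + card (fresh - cw_full)"
    using card_Diff_subset[OF finite_subset[OF _ fin]] card_mono[OF fin] by fastforce
  ultimately show ?thesis by linarith
qed

lemma card_full_le_card_gained:
  "m * (card cw_full + card ccw_full) \<le> card (\<Union>e\<in>fresh. gained e)"
proof -
  have fin: "finite fresh" using fresh_subset finite_verts finite_subset by auto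
  have fin_gained: "finite (gained e)" for e using gained_subset finite_verts finite_subset by blast
  have "m * (card cw_full + card ccw_full) = (\<Sum>e\<in>fresh. m * (of_bool (e \<in> cw_full) + of_bool (e \<in> ccw_full)))"
    using fin by (simp add: sum_distrib_left[symmetric] sum.distrib Int_def cw_full_def ccw_full_def)
  also have "\<dots> \<le> (\<Sum>e\<in>fresh. card (gained e))"
  proof (rule sum_mono)
    fix e assume e: "e \<in> fresh"
    have ein: "e \<in> {1..n}" "m < n" "2 * m < n" using fresh_subset e n_ge by auto
    have "m * (of_bool (e \<in> cw_full) + of_bool (e \<in> ccw_full))
        = card ((if e \<in> cw_full then cw_nbhd n m e else {}) \<union> (if e \<in> ccw_full then ccw_nbhd n m e else {}))"
      using cw_nbhd_ccw_nbhd_disjoint[OF ein(3), of e] card_cw_nbhd[OF ein(1,2)] card_ccw_nbhd[OF ein(1,2)]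
      by (subst card_Un_disjoint) (auto simp: cw_nbhd_def ccw_nbhd_def)
    also have "\<dots> \<le> card (gained e)"
      using fin_gained unfolding cw_full_def ccw_full_def by (intro card_mono) auto
    finally show "m * (of_bool (e \<in> cw_full) + of_bool (e \<in> ccw_full)) \<le> card (gained e)" .
  qed
  also have "\<dots> = card (\<Union>e\<in>fresh. gained e)"
    using fin fin_gained gained_disjoint by (intro card_UN_disjoint[symmetric]) auto
  finally show ?thesis .
qed

lemma card_gained_ge:
  assumes "2 \<le> card fresh"
  shows "m * card fresh \<le> card (\<Union>e\<in>fresh. gained e)"
  using mult_le_mono2[OF card_fresh_le_card_full[OF assms], of m] card_full_le_card_gained
  by linarith

lemma card_gained_ge_2m:
  assumes "0 < length S"
  shows "2 * m \<le> card (\<Union>e\<in>fresh. gained e)"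
proof -
  have "(\<Union>e\<in>fresh. gained e) \<subseteq> verts C" using gained_subset by blast
  then have fin: "finite (\<Union>e\<in>fresh. gained e)" using finite_verts finite_subset by blast
  have "vtx 0 \<in> {1..n}" using entry_verts[OF assms] by simp
  then have "2 * m = card (gained (vtx 0))"
    using first_entry_fresh[OF assms] card_adj_cycle_pow[of "vtx 0" n m] n_ge by simp
  also have "\<dots> \<le> card (\<Union>e\<in>fresh. gained e)"
    using first_entry_fresh(1)[OF assms] fin by (intro card_mono) auto
  finally show ?thesis .
qed


lemma fresh_mem_I2: "2 \<le> card fresh \<Longrightarrow> fresh \<in> I2 n m"
  using fresh_subset unfolding I2_def indep_set_def by (simp add: fresh_nonadj)

lemma length_bound_many_fresh:
  assumes "2 \<le> card fresh"
  shows "length S + card fresh * (m + 1) \<le> (\<Sum>e\<in>fresh. gamma_gr (R e)) + n"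
  using length_add_card_fresh_le card_gained_ge[OF assms] by (simp add: algebra_simps)

lemma length_bound_single_fresh:
  assumes "0 < length S" "card fresh < 2"
  shows "length S + 1 + 2 * m \<le> gamma_gr (R (vtx 0)) + n"
proof -
  have "vtx 0 \<in> fresh" using first_entry_fresh assms(1) by simp
  moreover have "finite fresh" using fresh_subset finite_verts finite_subset by blast
  ultimately have "card fresh = 1" using assms(2) by (cases "card fresh") auto
  then obtain e where "fresh = {e}" by (rule card_1_singletonE)
  with \<open>vtx 0 \<in> fresh\<close> have "fresh = {vtx 0}" by simp
  then show ?thesis using length_add_card_fresh_le card_gained_ge_2m[OF assms(1)] by simp
qed
end

section \<open>The sequence S_C(I)\<close>


abbreviation sparse :: "nat \<Rightarrow> nat list \<Rightarrow> bool" where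
  "sparse m xs \<equiv> sorted_wrt (\<lambda>x y. x + m < y) xs"

definition gap_runs :: "nat \<Rightarrow> nat list \<Rightarrow> nat list" where
  "gap_runs m xs = concat (map (\<lambda>(a, b). [a ..< b - m]) (zip xs (tl xs)))"

lemma gap_runs_Nil[simp]: "gap_runs m [] = []" unfolding gap_runs_def by simp
lemma gap_runs_single[simp]: "gap_runs m [x] = []" unfolding gap_runs_def by simp
lemma gap_runs_Cons_Cons[simp]: "gap_runs m (x # y # zs) = [x ..< y - m] @ gap_runs m (y # zs)" unfolding gap_runs_def by simp

lemma sparse_le_last: "sparse m xs \<Longrightarrow> z \<in> set xs \<Longrightarrow> z \<le> last xs"
proof (induction xs)
  case Nil then show ?case by simp
next
  case (Cons a xs)
  show ?case
  proof (cases "xs = []")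
    case True
    then have "z = a" "last (a # xs) = a" using Cons.prems(2) by auto
    then show ?thesis by simp
  next
    case False
    then have "last xs \<in> set xs" by simp
    then have "a + m < last xs" using Cons.prems(1) by auto
    moreover have "z \<in> set xs \<Longrightarrow> z \<le> last xs" using Cons.IH Cons.prems(1) by auto
    ultimately show ?thesis using Cons.prems(2) False by auto
  qed
qed

lemma gap_runs_bounds: "sparse m xs \<Longrightarrow> z \<in> set (gap_runs m xs) \<Longrightarrow> hd xs \<le> z \<and> z + m < last xs"
proof (induction xs rule: induct_list012)
  case 1 then show ?case by simp
next
  case (2 x) then show ?case by simp
next
  case (3 x y zs)
  have s: "sparse m (y # zs)" using "3.prems"(1) by simp
  have xy: "x + m < y" using "3.prems"(1) by simp
  have yl: "y \<le> last (y # zs)" using sparse_le_last[OF s] by simp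
  show ?case
  proof (cases "z \<in> set [x ..< y - m]")
    case True then show ?thesis using xy yl by auto
  next
    case False
    then have "z \<in> set (gap_runs m (y # zs))" using "3.prems"(2) by auto
    then show ?thesis using "3.IH"(2)[OF s] xy by auto
  qed
qed

lemma gap_runs_gap: "sparse m xs \<Longrightarrow> z \<in> set (gap_runs m xs) \<Longrightarrow> x \<in> set xs \<Longrightarrow> z < x \<Longrightarrow> z + m < x"
proof (induction xs arbitrary: x rule: induct_list012)
  case 1 then show ?case by simp
next
  case (2 x) then show ?case by simp
next
  case (3 u v zs)
  have s: "sparse m (v # zs)" using "3.prems"(1) by simp
  have uv: "u + m < v" using "3.prems"(1) by simp
  show ?case
  proof (cases "z \<in> set [u ..< v - m]")
    case True
    then have z: "u \<le> z" "z + m < v" by auto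
    have "x \<noteq> u" using "3.prems"(4) z by auto
    then have "x \<in> set (v # zs)" using "3.prems"(3) by auto
    then have "v \<le> x" using "3.prems"(1) by auto
    then show ?thesis using z by auto
  next
    case False
    then have zF: "z \<in> set (gap_runs m (v # zs))" using "3.prems"(2) by auto
    show ?thesis
    proof (cases "x = u")
      case True
      have "v \<le> z" using gap_runs_bounds[OF s zF] by simp
      then show ?thesis using True "3.prems"(4) uv by auto
    next
      case False
      then have "x \<in> set (v # zs)" using "3.prems"(3) by auto
      then show ?thesis using "3.IH"(2)[OF s zF] "3.prems"(4) by blast
    qed
  qed
qed

lemma mem_gap_runs: "sparse m xs \<Longrightarrow> x \<in> set xs \<Longrightarrow> x \<noteq> last xs \<Longrightarrow> x \<in> set (gap_runs m xs)"
proof (induction xs arbitrary: x rule: induct_list012)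
  case 1 then show ?case by simp
next
  case (2 x) then show ?case by simp
next
  case (3 u v zs)
  have s: "sparse m (v # zs)" using "3.prems"(1) by simp
  have uv: "u + m < v" using "3.prems"(1) by simp
  show ?case
  proof (cases "x = u")
    case True then show ?thesis using uv by auto
  next
    case False
    then have "x \<in> set (v # zs)" "x \<noteq> last (v # zs)" using "3.prems" by auto
    then show ?thesis using "3.IH"(2)[OF s] by auto
  qed
qed

lemma length_gap_runs: "sparse m xs \<Longrightarrow> xs \<noteq> [] \<Longrightarrow> length (gap_runs m xs) + m * (length xs - 1) = last xs - hd xs"
proof (induction xs rule: induct_list012)
  case 1 then show ?case by simp
next
  case (2 x) then show ?case by simp
next
  case (3 u v zs)
  have s: "sparse m (v # zs)" using "3.prems"(1) by simp
  have uv: "u + m < v" using "3.prems"(1) by simp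
  have IH: "length (gap_runs m (v # zs)) + m * length zs = last (v # zs) - v" using "3.IH"(2)[OF s] by simp
  have yl: "v \<le> last (v # zs)" using sparse_le_last[OF s] by simp
  have "length (gap_runs m (u # v # zs)) + m * (length (u # v # zs) - 1) = (v - m - u) + length (gap_runs m (v # zs)) + m * (length zs + 1)"
    by simp
  also have "\<dots> = last (u # v # zs) - u" using IH uv yl by (simp add: algebra_simps)
  finally show ?case by simp
qed

lemma gap_runs_cover: "0 < m \<Longrightarrow> sparse m xs \<Longrightarrow> xs \<noteq> [] \<Longrightarrow> hd xs \<le> w \<Longrightarrow> w < last xs \<Longrightarrow> w \<notin> set xs \<Longrightarrow>
    \<exists>y\<in>set (gap_runs m xs). y < w \<and> w \<le> y + m"
proof (induction xs rule: induct_list012)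
  case 1 then show ?case by simp
next
  case (2 x) then show ?case by simp
next
  case (3 u v zs)
  have s: "sparse m (v # zs)" using "3.prems"(2) by simp
  have uv: "u + m < v" using "3.prems"(2) by simp
  have wu: "u < w" using "3.prems"(4,6) by auto
  show ?case
  proof (cases "w < v")
    case True
    show ?thesis
    proof (cases "w < v - m")
      case True
      then have "w - 1 \<in> set [u ..< v - m]" using wu by auto
      then show ?thesis using wu "3.prems"(1) by (intro bexI[of _ "w - 1"]) auto
    next
      case False
      have "v - m - 1 \<in> set [u ..< v - m]" using uv by auto
      then show ?thesis using False \<open>w < v\<close> uv by (intro bexI[of _ "v - m - 1"]) auto
    qed
  next
    case False
    then have "v < w" using "3.prems"(6) by auto
    then obtain y where "y \<in> set (gap_runs m (v # zs))" "y < w \<and> w \<le> y + m"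
      using "3.IH"(2)[OF "3.prems"(1) s] "3.prems"(5,6) \<open>v < w\<close> by auto
    then show ?thesis by auto
  qed
qed

lemma sorted_gap_runs: "sparse m xs \<Longrightarrow> sorted_wrt (<) (gap_runs m xs)"
proof (induction xs rule: induct_list012)
  case 1 then show ?case by simp
next
  case (2 x) then show ?case by simp
next
  case (3 u v zs)
  have s: "sparse m (v # zs)" using "3.prems"(1) by simp
  have "\<forall>a\<in>set [u ..< v - m]. \<forall>z\<in>set (gap_runs m (v # zs)). a < z"
  proof (intro ballI)
    fix a z assume "a \<in> set [u ..< v - m]" "z \<in> set (gap_runs m (v # zs))"
    then show "a < z" using gap_runs_bounds[OF s] by fastforce
  qed
  then show ?case using "3.IH"(2)[OF s] by (simp add: sorted_wrt_append)
qed



lemma not_mem_cnbhd_cycle_pow_far: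
  assumes "e \<in> {1..n}" "x \<in> {1..n}" "y \<in> {1..n}" "cw_dist n e x < cw_dist n e y"
    and "m < cw_dist n e y - cw_dist n e x" "cw_dist n e y - cw_dist n e x < n - m"
  shows "x \<notin> cnbhd (cycle_pow n m) y" "y \<notin> cnbhd (cycle_pow n m) x"
  using adj_cycle_pow_cw_dist_iff[OF assms(1-4), of m] adj_cycle_pow_sym[of n m x y] assms(4-6)
  unfolding cnbhd_cycle_pow by auto

lemma mem_cnbhd_cycle_pow_near:
  assumes "e \<in> {1..n}" "x \<in> {1..n}" "y \<in> {1..n}" "cw_dist n e x < cw_dist n e y"
    and "cw_dist n e y - cw_dist n e x \<le> m"
  shows "x \<in> cnbhd (cycle_pow n m) y" "y \<in> cnbhd (cycle_pow n m) x"
  using adj_cycle_pow_cw_dist_iff[OF assms(1-4), of m] adj_cycle_pow_sym[of n m x y] assms(5)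
  unfolding cnbhd_cycle_pow by auto

locale S_C_setup =
  fixes n m :: nat and I :: "nat set"
  assumes m_pos: "1 \<le> m" and n_ge: "2 * (m + 1) \<le> n" and I2: "I \<in> I2 n m"
begin

abbreviation "C \<equiv> cycle_pow n m"

definition "ilist = sorted_list_of_set I"
definition "i1 = hd ilist"
definition "ip = last ilist"
definition "wrap = n + i1 - ip"
definition "runs = gap_runs m ilist"
definition "back j = cw_shift n ip (m + 1 + j)"
definition "back_len = wrap - (m + 1)"
definition "back_run = rev (map back [0..<back_len])"

text \<open>All positions are measured clockwise from ip: the other vertices of I lie at distance at
  least wrap, the vertices of runs in [wrap, n - m) in increasing order, those of back_run in
  [m + 1, wrap) in decreasing order.\<close>

abbreviation "ofs \<equiv> cw_dist n ip"

lemma I_props: "finite I" "I \<subseteq> {1..n}" "2 \<le> card I" "u \<in> I \<Longrightarrow> v \<in> I \<Longrightarrow> \<not> adj C u v"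
  using I2 unfolding I2_def indep_set_def by (auto intro: card_ge_0_finite)

lemma ilist: "sorted_wrt (<) ilist" "set ilist = I" "length ilist = card I" "ilist \<noteq> []"
  unfolding ilist_def using I_props(1,3) by auto

lemma sparse_ilist: "sparse m ilist"
proof (rule sorted_wrt_mono_rel[OF _ ilist(1)])
  fix x y assume "x \<in> set ilist" "y \<in> set ilist" "x < y"
  then show "x + m < y"
    using I_props(2) I_props(4)[of x y] ilist(2) unfolding adj_cycle_pow_iff cw_dist_def by auto
qed

lemma i1_ip: "i1 \<in> I" "ip \<in> I" "u \<in> I \<Longrightarrow> i1 \<le> u" "u \<in> I \<Longrightarrow> u \<le> ip" "i1 + m < ip"
proof -
  obtain x xs where x: "ilist = x # xs" using ilist(4) by (cases ilist) auto
  have "xs \<noteq> []" using ilist(3) I_props(3) x by auto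
  then have "ip \<in> set xs" "i1 = x" unfolding ip_def i1_def x by auto
  moreover have "\<forall>y\<in>set xs. x + m < y" "\<forall>y\<in>set xs. x < y" using sparse_ilist ilist(1) x by simp_all
  ultimately show "i1 + m < ip" by simp
  show "i1 \<in> I" "ip \<in> I" using \<open>ip \<in> set xs\<close> \<open>i1 = x\<close> x ilist(2) by auto
  show "u \<le> ip" if "u \<in> I" for u
    using sparse_le_last[OF sparse_ilist] that ilist(2) unfolding ip_def by auto
  show "i1 \<le> u" if "u \<in> I" for u
  proof -
    have "u = x \<or> u \<in> set xs" using that ilist(2) x by auto
    then show ?thesis using \<open>\<forall>y\<in>set xs. x < y\<close> \<open>i1 = x\<close> by auto
  qed
qed

lemma ip_mem: "ip \<in> {1..n}" "i1 \<in> {1..n}"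
  using I_props(2) i1_ip by auto

lemma ofs_below: "y \<in> {1..n} \<Longrightarrow> y < ip \<Longrightarrow> ofs y = y + n - ip"
  unfolding cw_dist_def by auto

lemma wrap_props: "m < wrap" "wrap + m < n" "back_len + m + 1 = wrap" "ofs i1 = wrap"
proof -
  show "ofs i1 = wrap" using ofs_below ip_mem i1_ip(5) unfolding wrap_def by auto
  moreover have "\<not> adj C ip i1" using I_props(4) i1_ip by blast
  ultimately show "m < wrap"
    using ip_mem i1_ip(5) unfolding adj_cycle_pow_iff cw_dist_def by auto
  show "wrap + m < n" using i1_ip(5) ip_mem unfolding wrap_def by auto
  show "back_len + m + 1 = wrap" using \<open>m < wrap\<close> unfolding back_len_def by auto
qed

lemma back_props: assumes "j < back_len" shows "back j \<in> {1..n}" "cw_dist n ip (back j) = m + 1 + j"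
proof -
  have "m + 1 + j < n" using assms wrap_props by auto
  then show "back j \<in> {1..n}" "cw_dist n ip (back j) = m + 1 + j" unfolding back_def using cw_shift_mem cw_dist_cw_shift ip_mem by auto
qed

lemma S_C_eq: "S_C n m I = runs @ back_run @ [ip]"
proof -
  have "map (\<lambda>k. (ip + m + k) mod n + 1) [0..<back_len] = map back [0..<back_len]"
  proof (rule map_cong[OF refl])
    fix k assume "k \<in> set [0..<back_len]"
    then have k: "k < back_len" by auto
    then have k2: "ip + m + k < 2 * n" using wrap_props ip_mem unfolding wrap_def by auto
    show "(ip + m + k) mod n + 1 = back k"
    proof (cases "ip + m + k < n")
      case True
      then show ?thesis unfolding back_def cw_shift_def by auto
    next
      case False
      then have "(ip + m + k) mod n = ip + m + k - n" using k2 by (simp add: mod_if)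
      then show ?thesis using False k2 unfolding back_def cw_shift_def by auto
    qed
  qed
  then show ?thesis unfolding S_C_def Let_def runs_def gap_runs_def back_run_def back_len_def wrap_def i1_def ip_def ilist_def by simp
qed

lemma runs_props:
  shows "sorted_wrt (<) runs" "distinct runs"
    "\<And>y. y \<in> set runs \<Longrightarrow> i1 \<le> y \<and> y + m < ip"
    "\<And>y. y \<in> set runs \<Longrightarrow> y \<in> {1..n}"
    "\<And>y. y \<in> set runs \<Longrightarrow> cw_dist n ip y = y + n - ip \<and> wrap \<le> cw_dist n ip y \<and> cw_dist n ip y + m < n"
    "\<And>y x. y \<in> set runs \<Longrightarrow> x \<in> I \<Longrightarrow> y < x \<Longrightarrow> y + m < x"
    "I \<subseteq> insert ip (set runs)"
    "length runs + m * (card I - 1) = ip - i1"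
proof -
  show s: "sorted_wrt (<) runs" unfolding runs_def using sorted_gap_runs[OF sparse_ilist] .
  then show "distinct runs" by (simp add: strict_sorted_iff)
  show r: "\<And>y. y \<in> set runs \<Longrightarrow> i1 \<le> y \<and> y + m < ip"
    using gap_runs_bounds[OF sparse_ilist] unfolding runs_def i1_def ip_def by blast
  show "\<And>y. y \<in> set runs \<Longrightarrow> y \<in> {1..n}"
  proof -
    fix y assume "y \<in> set runs"
    then show "y \<in> {1..n}" using r[of y] ip_mem by auto
  qed
  show "\<And>y. y \<in> set runs \<Longrightarrow> cw_dist n ip y = y + n - ip \<and> wrap \<le> cw_dist n ip y \<and> cw_dist n ip y + m < n"
  proof -
    fix y assume "y \<in> set runs"
    then have y: "i1 \<le> y" "y + m < ip" using r by auto
    then have "\<not> ip \<le> y" by simp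
    then have o: "cw_dist n ip y = y + n - ip" unfolding cw_dist_def by simp
    have "ip \<le> n" using ip_mem by simp
    then show "cw_dist n ip y = y + n - ip \<and> wrap \<le> cw_dist n ip y \<and> cw_dist n ip y + m < n"
      using o y unfolding wrap_def by linarith
  qed
  show "\<And>y x. y \<in> set runs \<Longrightarrow> x \<in> I \<Longrightarrow> y < x \<Longrightarrow> y + m < x"
    using gap_runs_gap[OF sparse_ilist] ilist(2) unfolding runs_def by blast
  show "I \<subseteq> insert ip (set runs)"
    using mem_gap_runs[OF sparse_ilist] ilist(2) unfolding runs_def ip_def by blast
  show "length runs + m * (card I - 1) = ip - i1"
    using length_gap_runs[OF sparse_ilist ilist(4)] ilist(3) unfolding runs_def ip_def i1_def by simp
qed

lemma back_run_props:
  shows "length back_run = back_len" "\<And>k. k < back_len \<Longrightarrow> back_run ! k = back (back_len - 1 - k)" "set back_run = back ` {..<back_len}" "distinct back_run"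
proof -
  show "length back_run = back_len" unfolding back_run_def by simp
  show "\<And>k. k < back_len \<Longrightarrow> back_run ! k = back (back_len - 1 - k)"
  proof -
    fix k assume k: "k < back_len"
    have "back_run ! k = map back [0..<back_len] ! (length (map back [0..<back_len]) - Suc k)"
      unfolding back_run_def using k by (simp only: rev_nth length_map length_upt)
    also have "\<dots> = back (back_len - 1 - k)" using k by simp
    finally show "back_run ! k = back (back_len - 1 - k)" .
  qed
  show "set back_run = back ` {..<back_len}" unfolding back_run_def by (simp only: set_rev set_map set_upt atLeast0LessThan)
  have "inj_on back {..<back_len}"
  proof (rule inj_onI)
    fix j j' assume jj: "j \<in> {..<back_len}" "j' \<in> {..<back_len}" "back j = back j'"
    then have jl: "j < back_len" "j' < back_len" by auto
    have e1: "cw_dist n ip (back j) = m + 1 + j" by (rule back_props(2)[OF jl(1)])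
    have e2: "cw_dist n ip (back j') = m + 1 + j'" by (rule back_props(2)[OF jl(2)])
    have "cw_dist n ip (back j) = cw_dist n ip (back j')" using jj(3) by (rule arg_cong)
    then show "j = j'" using e1 e2 by linarith
  qed
  then show "distinct back_run" unfolding back_run_def
    by (simp only: distinct_rev distinct_map distinct_upt set_upt atLeast0LessThan simp_thms)
qed

lemma wrap_le_ofs_I: "x \<in> I \<Longrightarrow> x \<noteq> ip \<Longrightarrow> wrap \<le> cw_dist n ip x"
  using i1_ip(3,4)[of x] unfolding cw_dist_def wrap_def by auto

lemma distinct_S_C: "distinct (S_C n m I)"
proof -
  have d1: "set runs \<inter> set back_run = {}"
  proof -
    { fix y assume y: "y \<in> set runs" "y \<in> set back_run"
      then obtain j where j: "j < back_len" "y = back j" using back_run_props(3) by auto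
      have "cw_dist n ip y = m + 1 + j" using back_props(2)[OF j(1)] j(2) by simp
      moreover have "wrap \<le> cw_dist n ip y" using runs_props(5)[OF y(1)] by simp
      ultimately have False using j(1) wrap_props(3) by simp }
    then show ?thesis by auto
  qed
  have d2: "ip \<notin> set runs" using runs_props(3) by fastforce
  have d3: "ip \<notin> set back_run"
  proof
    assume "ip \<in> set back_run"
    then obtain j where j: "j < back_len" "ip = back j" using back_run_props(3) by auto
    then show False using back_props(2)[OF j(1)] by simp
  qed
  show ?thesis unfolding S_C_eq using runs_props(2) back_run_props(4) d1 d2 d3 by auto
qed

lemma I_subset_S_C: "I \<subseteq> set (S_C n m I)"
  unfolding S_C_eq using runs_props(7) by auto

lemma length_S_C: "length (S_C n m I) + m * card I = n"
proof -
  have c: "card I = Suc (card I - 1)" using I_props(3) by simp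
  have "length (runs @ back_run @ [ip]) = length runs + back_len + 1" using back_run_props(1) by simp
  moreover have "length runs + m * (card I - 1) = ip - i1" by (rule runs_props(8))
  moreover have "back_len + m + 1 = wrap" by (rule wrap_props(3))
  moreover have "wrap = n + i1 - ip" unfolding wrap_def ..
  moreover have "i1 < ip" "ip \<le> n" using i1_ip ip_mem by auto
  moreover have "m * card I = m * (card I - 1) + m" using c by (metis mult_Suc_right add.commute)
  ultimately show ?thesis unfolding S_C_eq by linarith
qed

lemma legal_self_private_runs: "legal_self_private C I runs"
proof (rule legal_self_private_appendI[where X = "[]", simplified])
  show "legal_self_private C I []" by (simp add: legal_self_private_def legal_seq_def)
  show "distinct runs" "set runs \<subseteq> verts C" using runs_props(2,4) by auto
  fix k assume k: "k < length runs"
  let ?q = "runs ! k"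
  have q: "?q \<in> set runs" using k by simp
  have q_range: "?q \<in> {1..n}" "i1 \<le> ?q" "?q + m < ip" using runs_props(3,4)[OF q] by auto
  define w where "w = (if ?q \<in> I then ?q else ?q + m)"
  have w: "w \<in> {1..n}" "?q \<le> w" "w < ip" "?q \<notin> I \<Longrightarrow> w = ?q + m"
    using q_range ip_mem unfolding w_def by auto
  have "w \<in> cnbhd C ?q"
  proof (cases "?q \<in> I")
    case False
    have "ofs ?q < ofs w" "ofs w - ofs ?q \<le> m"
      using ofs_below q_range w False m_pos ip_mem by auto
    then show ?thesis using mem_cnbhd_cycle_pow_near(2)[where m = m, OF ip_mem(1) q_range(1) w(1)] by blast
  qed (simp add: w_def cnbhd_self)
  moreover have "w \<notin> cnbhd C (runs ! j)" if j: "j < k" for j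
  proof -
    let ?y = "runs ! j"
    have y: "?y \<in> set runs" "?y < ?q" using sorted_wrt_nth_less[OF runs_props(1) j k] j k by auto
    have y_range: "?y \<in> {1..n}" "i1 \<le> ?y" using runs_props(3,4)[OF y(1)] by auto
    have "m < w - ?y"
      using runs_props(6)[OF y(1) _ y(2)] w(4) y(2) unfolding w_def by (cases "?q \<in> I") auto
    moreover have "w - ?y < n - m" using w(3) y_range(2) wrap_props(1) i1_ip(5) unfolding wrap_def by linarith
    moreover have "ofs w - ofs ?y = w - ?y" "ofs ?y < ofs w"
      using ofs_below y y_range w ip_mem by auto
    ultimately show ?thesis using not_mem_cnbhd_cycle_pow_far(2)[where m = m, OF ip_mem(1) y_range(1) w(1)] by auto
  qed
  ultimately show "\<exists>w \<in> cnbhd C ?q. (?q \<in> I \<longrightarrow> w = ?q) \<and> (\<forall>j<k. w \<notin> cnbhd C (runs ! j))"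
    by (intro bexI[of _ w]) (auto simp: w_def)
qed

lemma ofs_runs_back_run:
  assumes "y \<in> set runs \<union> set back_run"
  shows "y \<in> {1..n}" "m < ofs y \<and> ofs y + m < n"
proof -
  show "y \<in> {1..n}" using assms runs_props(4) back_run_props(3) back_props(1) by auto
  show "m < ofs y \<and> ofs y + m < n"
  proof (cases "y \<in> set runs")
    case True
    then show ?thesis using runs_props(5)[OF True] wrap_props(1) by linarith
  next
    case False
    then obtain j where "j < back_len" "y = back j" using assms back_run_props(3) by auto
    then show ?thesis using back_props(2) wrap_props(2,3) by auto
  qed
qed

lemma legal_self_private_runs_back_run: "legal_self_private C I (runs @ back_run)"
proof (rule legal_self_private_appendI[OF legal_self_private_runs])
  show "distinct back_run" by (rule back_run_props(4))
  show "set back_run \<subseteq> verts C" using back_run_props(3) back_props(1) by auto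
  show "set runs \<inter> set back_run = {}" using distinct_S_C unfolding S_C_eq by auto
  fix k assume k: "k < length back_run"
  define kk where "kk = back_len - 1 - k"
  have kk: "kk < back_len" "back_run ! k = back kk" using k back_run_props(1,2) unfolding kk_def by auto
  let ?q = "back_run ! k"
  have q: "?q \<in> {1..n}" "ofs ?q = m + 1 + kk" using back_props kk by auto
  define w where "w = cw_shift n ip (kk + 1)"
  have "kk + 1 < n" using kk(1) wrap_props by linarith
  then have w: "w \<in> {1..n}" "ofs w = kk + 1" using cw_shift_mem cw_dist_cw_shift ip_mem(1) unfolding w_def by auto
  have "w \<in> cnbhd C ?q" using mem_cnbhd_cycle_pow_near(1)[where m = m, OF ip_mem(1) w(1) q(1)] w q m_pos by simp
  moreover have "?q \<notin> I"
    using wrap_le_ofs_I[of ?q] q(2) kk(1) wrap_props(3) by (cases "?q = ip") auto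
  moreover have "w \<notin> cnbhd C y" if "y \<in> set runs" for y
  proof -
    have "y \<in> {1..n}" "wrap \<le> ofs y" "ofs y + m < n" using runs_props(4,5)[OF that] by blast+
    then show ?thesis
      using not_mem_cnbhd_cycle_pow_far(1)[where m = m, OF ip_mem(1) w(1)] w kk(1) wrap_props(3) by simp
  qed
  moreover have "w \<notin> cnbhd C (back_run ! j)" if j: "j < k" for j
  proof -
    define jj where "jj = back_len - 1 - j"
    have jj: "jj < back_len" "back_run ! j = back jj" "kk < jj"
      using j k back_run_props(1,2) unfolding jj_def kk_def by auto
    then show ?thesis
      using not_mem_cnbhd_cycle_pow_far(1)[where m = m, OF ip_mem(1) w(1) back_props(1)[OF jj(1)]] w back_props(2)[OF jj(1)]
        wrap_props by simp
  qed
  ultimately show "\<exists>w \<in> cnbhd C ?q. (?q \<in> I \<longrightarrow> w = ?q) \<and> (\<forall>q\<in>set runs. w \<notin> cnbhd C q)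
      \<and> (\<forall>j<k. w \<notin> cnbhd C (back_run ! j))" by blast
qed

lemma legal_self_private_S_C: "legal_self_private C I (S_C n m I)"
  unfolding S_C_eq append_assoc[symmetric]
proof (rule legal_self_private_appendI[OF legal_self_private_runs_back_run])
  show "set (runs @ back_run) \<inter> set [ip] = {}" using distinct_S_C unfolding S_C_eq by auto
  have "ip \<notin> cnbhd C y" if "y \<in> set (runs @ back_run)" for y
  proof -
    have "y \<in> {1..n}" "m < ofs y" "ofs y < n - m" using ofs_runs_back_run[of y] that by auto
    then show ?thesis using not_mem_cnbhd_cycle_pow_far(1)[where m = m, OF ip_mem(1) ip_mem(1)] by simp
  qed
  then show "\<exists>w \<in> cnbhd C ([ip] ! k). ([ip] ! k \<in> I \<longrightarrow> w = [ip] ! k) \<and> (\<forall>q\<in>set (runs @ back_run). w \<notin> cnbhd C q)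
      \<and> (\<forall>j<k. w \<notin> cnbhd C ([ip] ! j))" if "k < length [ip]" for k
    using that cnbhd_self[of ip C] by auto
qed (use ip_mem in auto)

lemma runs_dominate:
  assumes w: "w \<in> {1..n} - I" "wrap \<le> ofs w"
  shows "\<exists>y\<in>set runs. adj C y w"
proof -
  have "w < ip"
  proof (rule ccontr)
    assume "\<not> w < ip"
    then have "ofs w = w - ip" unfolding cw_dist_def by simp
    then show False using w ip_mem unfolding wrap_def by auto
  qed
  then have "i1 \<le> w" using w ofs_below ip_mem(1) unfolding wrap_def by auto
  moreover have "w \<notin> set ilist" using w ilist(2) by auto
  ultimately obtain y where y: "y \<in> set runs" "y < w" "w \<le> y + m"
    using gap_runs_cover[of m ilist w] m_pos sparse_ilist ilist(4) \<open>w < ip\<close>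
    unfolding runs_def i1_def ip_def by auto
  then have "adj C y w" using runs_props(4)[OF y(1)] w(1) unfolding adj_cycle_pow_iff cw_dist_def by auto
  then show ?thesis using y(1) by auto
qed

lemma S_C_dominates:
  assumes w: "w \<in> {1..n} - I"
  shows "\<exists>q\<in>set (S_C n m I). adj C q w"
proof -
  have wn: "w \<in> {1..n}" "w \<noteq> ip" using w i1_ip(2) by auto
  let ?r = "ofs w"
  have r: "0 < ?r" using cw_dist_eq_0_iff[OF ip_mem(1) wn(1)] wn(2) by auto
  consider "?r \<le> m" | "m < ?r" "?r + 1 < wrap" | "?r + 1 = wrap" | "wrap \<le> ?r" by linarith
  then show ?thesis
  proof cases
    case 1
    then have "adj C ip w" using adj_cycle_pow_cw_dist_iff[OF ip_mem(1) ip_mem(1) wn(1)] r by simp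
    then show ?thesis unfolding S_C_eq by auto
  next
    case 2
    define j where "j = ?r - m"
    have j: "j < back_len" using 2 wrap_props(3) unfolding j_def by linarith
    have b: "back j \<in> {1..n}" "ofs (back j) = ?r + 1" using back_props[OF j] 2 unfolding j_def by auto
    then have "adj C w (back j)"
      using adj_cycle_pow_cw_dist_iff[where m = m, OF ip_mem(1) wn(1) b(1)] m_pos by simp
    then have "adj C (back j) w" using adj_cycle_pow_sym by blast
    moreover have "back j \<in> set back_run" using back_run_props(3) j by auto
    ultimately show ?thesis unfolding S_C_eq by auto
  next
    case 3
    have "i1 \<in> set runs" using runs_props(7) i1_ip(1,5) by auto
    moreover have "adj C i1 w"
      using adj_cycle_pow_cw_dist_iff[OF ip_mem(1) wn(1) ip_mem(2)] adj_cycle_pow_sym wrap_props(4) 3 m_pos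
      by auto
    ultimately show ?thesis unfolding S_C_eq by auto
  next
    case 4
    then show ?thesis using runs_dominate[OF w] unfolding S_C_eq by auto
  qed
qed

end

section \<open>The Grundy domination number of X-joins over powers of cycles\<close>

definition indep_gain :: "(nat \<Rightarrow> 'a sgraph) \<Rightarrow> nat \<Rightarrow> nat set \<Rightarrow> int" where
  "indep_gain R m I = (\<Sum>i\<in>I. int (gamma_gr (R i))) - int (card I) * int (m + 1)"

definition max_indep_gain :: "(nat \<Rightarrow> 'a sgraph) \<Rightarrow> nat \<Rightarrow> nat \<Rightarrow> int" where
  "max_indep_gain R n m = Max (indep_gain R m ` I2 n m)"

lemma finite_I2: "finite (I2 n m)"
  by (rule finite_subset[of _ "Pow {1..n}"]) (auto simp: I2_def indep_set_def)

lemma I2_pair: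
  assumes "2 * (m + 1) \<le> n" "e \<in> {1..n}"
  shows "{e, cw_shift n e (m + 1)} \<in> I2 n m"
proof -
  let ?f = "cw_shift n e (m + 1)"
  have "m + 1 < n" using assms(1) by simp
  then have f: "?f \<in> {1..n}" "cw_dist n e ?f = m + 1"
    using cw_shift_mem[OF assms(2)] cw_dist_cw_shift[OF assms(2)] by auto
  then have "e \<noteq> ?f" by auto
  then have "cw_dist n ?f e = n - (m + 1)" using cw_dist_add_cw_dist[OF assms(2) f(1)] f(2) by auto
  then have "\<not> adj (cycle_pow n m) e ?f" "\<not> adj (cycle_pow n m) ?f e"
    using f assms(1) unfolding adj_cycle_pow_iff by auto
  then show ?thesis
    using \<open>e \<noteq> ?f\<close> assms(2) f(1) unfolding I2_def indep_set_def by auto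
qed

lemma indep_gain_le_max: "I \<in> I2 n m \<Longrightarrow> indep_gain R m I \<le> max_indep_gain R n m"
  unfolding max_indep_gain_def using finite_I2 by (intro Max_ge) auto

lemma max_indep_gain_attained:
  assumes "2 * (m + 1) \<le> n"
  obtains I where "I \<in> I2 n m" "indep_gain R m I = max_indep_gain R n m"
proof -
  have "I2 n m \<noteq> {}" using I2_pair[OF assms, of 1] assms by auto
  then have "max_indep_gain R n m \<in> indep_gain R m ` I2 n m"
    unfolding max_indep_gain_def using finite_I2 by (intro Max_in) auto
  then show ?thesis using that by auto
qed

lemma gamma_gr_add_le_max_indep_gain:
  assumes "2 * (m + 1) \<le> n" "\<forall>i\<in>{1..n}. graph (R i)" "e \<in> {1..n}"
  shows "int (gamma_gr (R e)) + 1 \<le> max_indep_gain R n m + 2 * int (m + 1)"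
proof -
  let ?f = "cw_shift n e (m + 1)"
  have I: "{e, ?f} \<in> I2 n m" using I2_pair[OF assms(1,3)] .
  then have "e \<noteq> ?f" "?f \<in> {1..n}" unfolding I2_def indep_set_def by (auto simp: card_insert_if split: if_splits)
  then have "indep_gain R m {e, ?f} = int (gamma_gr (R e)) + int (gamma_gr (R ?f)) - 2 * int (m + 1)"
    unfolding indep_gain_def by simp
  moreover have "0 < gamma_gr (R ?f)" using gamma_gr_pos assms(2) \<open>?f \<in> {1..n}\<close> by blast
  ultimately show ?thesis using indep_gain_le_max[OF I, of R] by linarith
qed

lemma legal_dom_seq_expand_S_C:
  fixes R :: "nat \<Rightarrow> 'a sgraph"
  assumes "1 \<le> m" "2 * (m + 1) \<le> n" "I \<in> I2 n m" and graphs: "\<forall>i\<in>{1..n}. graph (R i)"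
    and seqs: "\<forall>j\<in>I. legal_dom_seq (R j) (seqs j) \<and> length (seqs j) = gamma_gr (R j)"
    and c: "\<forall>j\<in>{1..n}. c j \<in> verts (R j)"
  shows "legal_dom_seq (xjoin (cycle_pow n m) R) (expand_seq I seqs c (S_C n m I))"
    and "int (length (expand_seq I seqs c (S_C n m I))) = indep_gain R m I + int n"
proof -
  interpret S_C_setup n m I using assms(1-3) by unfold_locales
  let ?Q = "S_C n m I"
  show "legal_dom_seq (xjoin (cycle_pow n m) R) (expand_seq I seqs c ?Q)"
    using legal_dom_seq_expand_seq[OF graph_cycle_pow _ _ _ legal_self_private_S_C] seqs c graphs
      I_subset_S_C S_C_dominates assms(2) by auto
  have Q: "distinct ?Q" "I \<subseteq> set ?Q" using distinct_S_C I_subset_S_C by auto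
  then have "card (set ?Q - I) = length ?Q - card I"
    using I_props(1) by (simp add: card_Diff_subset distinct_card)
  moreover have "card I \<le> length ?Q" using Q card_mono[of "set ?Q" I] distinct_card by fastforce
  moreover have "(\<Sum>j\<in>I. length (seqs j)) = (\<Sum>j\<in>I. gamma_gr (R j))" using seqs by simp
  moreover have "(m + 1) * card I = m * card I + card I" by simp
  ultimately have "length (expand_seq I seqs c ?Q) + (m + 1) * card I = (\<Sum>j\<in>I. gamma_gr (R j)) + n"
    using length_expand_seq[OF Q, of seqs c] length_S_C by linarith
  then have "int (length (expand_seq I seqs c ?Q) + (m + 1) * card I) = int ((\<Sum>j\<in>I. gamma_gr (R j)) + n)"
    by (rule arg_cong)
  then show "int (length (expand_seq I seqs c ?Q)) = indep_gain R m I + int n"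
    unfolding indep_gain_def by (simp add: algebra_simps)
qed

lemma legal_seq_xjoin_cycle_pow_length_le:
  fixes R :: "nat \<Rightarrow> 'a sgraph"
  assumes m: "1 \<le> m" and n: "2 * (m + 1) \<le> n" and graphs: "\<forall>i\<in>{1..n}. graph (R i)"
    and S: "legal_seq (xjoin (cycle_pow n m) R) S"
  shows "int (length S) \<le> max_indep_gain R n m + int n"
proof -
  interpret cycle_pow_legal_seq n m R S
  proof
    show "graph (cycle_pow n m)" using graph_cycle_pow n by simp
    show "finite (verts (R v))" if "v \<in> verts (cycle_pow n m)" for v
      using graphs that unfolding graph_def by auto
  qed (use S m n in auto)
  consider "2 \<le> card fresh" | "length S = 0" | "0 < length S" "card fresh < 2" by linarith
  then show ?thesis
  proof cases
    case 1
    then have "int (length S + card fresh * (m + 1)) \<le> int ((\<Sum>e\<in>fresh. gamma_gr (R e)) + n)"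
      using length_bound_many_fresh by (intro of_nat_mono)
    then have "int (length S) \<le> indep_gain R m fresh + int n"
      unfolding indep_gain_def by (simp add: algebra_simps)
    then show ?thesis using indep_gain_le_max[OF fresh_mem_I2[OF 1], of R] by linarith
  next
    case 2
    then show ?thesis using gamma_gr_add_le_max_indep_gain[OF n graphs, of 1] n by simp
  next
    case 3
    then have "int (length S + 1 + 2 * m) \<le> int (gamma_gr (R (vtx 0)) + n)"
      using length_bound_single_fresh by (intro of_nat_mono)
    moreover have "vtx 0 \<in> {1..n}" using entry_verts 3(1) by simp
    ultimately show ?thesis using gamma_gr_add_le_max_indep_gain[OF n graphs] by fastforce
  qed
qed

lemma gamma_gr_xjoin_cycle_pow:
  fixes R :: "nat \<Rightarrow> 'a sgraph"
  assumes m: "1 \<le> m" and n: "2 * (m + 1) \<le> n" and graphs: "\<forall>i\<in>{1..n}. graph (R i)"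
  shows "int (gamma_gr (xjoin (cycle_pow n m) R)) = max_indep_gain R n m + int n"
proof -
  let ?H = "xjoin (cycle_pow n m) R"
  have fin: "\<forall>i\<in>{1..n}. finite (verts (R i))" using graphs unfolding graph_def by auto
  then have finH: "finite (verts ?H)" using finite_verts_xjoin[of "cycle_pow n m" R] by simp
  obtain I where I: "I \<in> I2 n m" "indep_gain R m I = max_indep_gain R n m"
    using max_indep_gain_attained[OF n] by blast
  then have "I \<subseteq> {1..n}" unfolding I2_def indep_set_def by auto
  then have "\<forall>j\<in>I. \<exists>T. legal_dom_seq (R j) T \<and> length T = gamma_gr (R j)"
    using fin ex_legal_dom_seq_length_gamma_gr by blast
  from bchoice[OF this] obtain seqs
    where seqs: "\<forall>j\<in>I. legal_dom_seq (R j) (seqs j) \<and> length (seqs j) = gamma_gr (R j)" by blast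
  have "\<forall>j\<in>{1..n}. \<exists>y. y \<in> verts (R j)" using graphs unfolding graph_def by blast
  from bchoice[OF this] obtain c where c: "\<forall>j\<in>{1..n}. c j \<in> verts (R j)" by blast
  note S = legal_dom_seq_expand_S_C[OF m n I(1) graphs seqs c]
  have "max_indep_gain R n m + int n \<le> int (gamma_gr ?H)"
    using legal_seq_length_le_gamma_gr[OF finH] S I(2) unfolding legal_dom_seq_iff by fastforce
  moreover obtain T where T: "legal_dom_seq ?H T" "length T = gamma_gr ?H"
    using ex_legal_dom_seq_length_gamma_gr[OF finH] by blast
  then have "legal_seq ?H T" by (simp add: legal_dom_seq_iff)
  then have "int (length T) \<le> max_indep_gain R n m + int n"
    by (rule legal_seq_xjoin_cycle_pow_length_le[OF m n graphs])
  ultimately show ?thesis using T(2) by linarith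
qed

lemma grundy_dom_seq_expand_S_C:
  fixes R :: "nat \<Rightarrow> 'a sgraph"
  assumes m: "1 \<le> m" and n: "2 * (m + 1) \<le> n" and graphs: "\<forall>i\<in>{1..n}. graph (R i)"
    and Ss: "\<forall>i\<in>{1..n}. grundy_dom_seq (R i) (Ss i)" and c: "\<forall>j\<in>{1..n}. c j \<in> verts (R j)"
    and I: "I \<in> I2 n m" "indep_gain R m I = max_indep_gain R n m"
  shows "grundy_dom_seq (xjoin (cycle_pow n m) R) (expand_seq I Ss c (S_C n m I))"
proof -
  let ?H = "xjoin (cycle_pow n m) R"
  have fin: "\<forall>i\<in>{1..n}. finite (verts (R i))" using graphs unfolding graph_def by auto
  then have finH: "finite (verts ?H)" using finite_verts_xjoin[of "cycle_pow n m" R] by simp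
  have "I \<subseteq> {1..n}" using I(1) unfolding I2_def indep_set_def by auto
  then have "\<forall>j\<in>I. legal_dom_seq (R j) (Ss j) \<and> length (Ss j) = gamma_gr (R j)"
    using Ss fin grundy_dom_seq_iff by blast
  from legal_dom_seq_expand_S_C[OF m n I(1) graphs this c] show ?thesis
    using grundy_dom_seq_iff[OF finH] gamma_gr_xjoin_cycle_pow[OF m n graphs] I(2) by simp
qed

theorem theorem2:
  fixes n m :: nat and R :: "nat \<Rightarrow> 'a sgraph"
  assumes "1 \<le> m" and "2 * (m + 1) \<le> n"
    and "\<forall>i \<in> {1..n}. graph (R i)"
  shows "int (gamma_gr (xjoin (cycle_pow n m) R))
           = Max {(\<Sum>i\<in>I. int (gamma_gr (R i))) - int (card I) * int (m + 1) | I. I \<in> I2 n m} + int n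
     \<and> (\<forall>Ss Istar c.
           (\<forall>i \<in> {1..n}. grundy_dom_seq (R i) (Ss i)) \<and>
           Istar \<in> I2 n m \<and>
           (\<Sum>i\<in>Istar. int (gamma_gr (R i))) - int (card Istar) * int (m + 1)
             = Max {(\<Sum>i\<in>I. int (gamma_gr (R i))) - int (card I) * int (m + 1) | I. I \<in> I2 n m} \<and>
           (\<forall>j \<in> {1..n}. c j \<in> verts (R j))
         \<longrightarrow> grundy_dom_seq (xjoin (cycle_pow n m) R) (expand_seq Istar Ss c (S_C n m Istar)))"
proof -
  have max: "Max {indep_gain R m I | I. I \<in> I2 n m} = max_indep_gain R n m"
    unfolding max_indep_gain_def Setcompr_eq_image ..
  show ?thesis
    unfolding indep_gain_def[symmetric] max
  proof (intro conjI allI impI)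
    show "int (gamma_gr (xjoin (cycle_pow n m) R)) = max_indep_gain R n m + int n"
      by (rule gamma_gr_xjoin_cycle_pow[OF assms])
    fix Ss Istar c
    assume "(\<forall>i\<in>{1..n}. grundy_dom_seq (R i) (Ss i)) \<and> Istar \<in> I2 n m
      \<and> indep_gain R m Istar = max_indep_gain R n m \<and> (\<forall>j\<in>{1..n}. c j \<in> verts (R j))"
    then show "grundy_dom_seq (xjoin (cycle_pow n m) R) (expand_seq Istar Ss c (S_C n m Istar))"
      using grundy_dom_seq_expand_S_C[OF assms] by blast
  qed
qed
end
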